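(* Let $d\geq 3$ and let $G$ be a graph on $n$ vertices that is not $M$-independent in $\mathbb{R}^{d-2}$. For $i=1,\dots,d$ let $k_i$ denote the dimension of the space of infinitesimal motions of a generic realization of $G$ in $\mathbb{C}^i$. Then $k_i\geq 2k_{i+1}-k_{i+2}+1$ for $i=1,\dots,d-2$.
   Context: For $p:V\to\mathbb{C}^i$, the rigidity matrix $R(G,p)$ is the $|E|\times i|V|$ matrix whose row for edge $uv$ has $p(u)-p(v)$ in the columns of $u$, $p(v)-p(u)$ in the columns of $v$, zeros elsewhere; the infinitesimal motions are the elements of $\ker R(G,p)$. A realization is generic if its coordinates are algebraically independent over $\mathbb{Q}$ (the dimension $k_i$ is the same for all generic realizations). $G$ is $M$-independent in $\mathbb{R}^k$ if the rows of $R(G,p)$ are linearly independent for a generic $p:V\to\mathbb{R}^k$. *)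

theory Defs
  imports "HOL-Analysis.Analysis" "HOL-Library.Function_Algebras"
begin

text \<open>Graphs: vertex set {0..<n}; edges are pairs (u,v) with u < v < n.
  A realization in K^i is a map p :: nat => nat => K, p w j being the j-th
  coordinate (j < i) of vertex w.\<close>

definition simple_graph :: "nat \<Rightarrow> (nat \<times> nat) set \<Rightarrow> bool" where
  "simple_graph n E \<longleftrightarrow> E \<subseteq> {(u, v). u < v \<and> v < n}"

definition rig_entry :: "(nat \<Rightarrow> nat \<Rightarrow> 'a::ring) \<Rightarrow> nat \<times> nat \<Rightarrow> nat \<Rightarrow> nat \<Rightarrow> 'a" where
  "rig_entry p e w j =
     (if w = fst e then p (fst e) j - p (snd e) j
      else if w = snd e then p (snd e) j - p (fst e) j else 0)"

definition alg_indep_Q :: "'t set \<Rightarrow> ('t \<Rightarrow> 'a::field_char_0) \<Rightarrow> bool" where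
  "alg_indep_Q J x \<longleftrightarrow>
     (\<forall>(S :: ('t \<Rightarrow> nat) set) (c :: ('t \<Rightarrow> nat) \<Rightarrow> rat).
        finite S \<and> (\<forall>m\<in>S. \<forall>t. t \<notin> J \<longrightarrow> m t = 0) \<and>
        (\<Sum>m\<in>S. of_rat (c m) * (\<Prod>t\<in>J. x t ^ m t)) = 0
        \<longrightarrow> (\<forall>m\<in>S. c m = 0))"

definition generic :: "nat \<Rightarrow> nat \<Rightarrow> (nat \<Rightarrow> nat \<Rightarrow> 'a::field_char_0) \<Rightarrow> bool" where
  "generic n i p \<longleftrightarrow> alg_indep_Q ({0..<n} \<times> {0..<i}) (\<lambda>(w, j). p w j)"

definition inf_motions :: "nat \<Rightarrow> (nat \<times> nat) set \<Rightarrow> nat \<Rightarrow> (nat \<Rightarrow> nat \<Rightarrow> complex)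
    \<Rightarrow> (nat \<Rightarrow> nat \<Rightarrow> complex) set" where
  "inf_motions n E i p =
     {m. (\<forall>w j. (w \<ge> n \<or> j \<ge> i) \<longrightarrow> m w j = 0) \<and>
         (\<forall>e\<in>E. (\<Sum>w<n. \<Sum>j<i. rig_entry p e w j * m w j) = 0)}"

definition cscale :: "complex \<Rightarrow> (nat \<Rightarrow> nat \<Rightarrow> complex) \<Rightarrow> (nat \<Rightarrow> nat \<Rightarrow> complex)" where
  "cscale c m = (\<lambda>w j. c * m w j)"

definition motion_dim :: "nat \<Rightarrow> (nat \<times> nat) set \<Rightarrow> nat \<Rightarrow> (nat \<Rightarrow> nat \<Rightarrow> complex) \<Rightarrow> nat" where
  "motion_dim n E i p = vector_space.dim cscale (inf_motions n E i p)"

definition rows_independent :: "nat \<Rightarrow> (nat \<times> nat) set \<Rightarrow> nat \<Rightarrow> (nat \<Rightarrow> nat \<Rightarrow> real) \<Rightarrow> bool" where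
  "rows_independent n E k p \<longleftrightarrow>
     (\<forall>c :: nat \<times> nat \<Rightarrow> real.
        (\<forall>w<n. \<forall>j<k. (\<Sum>e\<in>E. c e * rig_entry p e w j) = 0) \<longrightarrow> (\<forall>e\<in>E. c e = 0))"

definition M_independent :: "nat \<Rightarrow> (nat \<times> nat) set \<Rightarrow> nat \<Rightarrow> bool" where
  "M_independent n E k \<longleftrightarrow>
     (\<forall>p :: nat \<Rightarrow> nat \<Rightarrow> real. generic n k p \<longrightarrow> rows_independent n E k p)"

end

theory Submission
  imports Defs "Jordan_Normal_Form.Determinant"
begin

text \<open>
  Let \<open>r\<close> be a generic realization in \<open>\<complex>\<^sup>i\<^sup>+\<^sup>2\<close> and write \<open>K(S)\<close> for the kernel of its rigidity
  matrix restricted to the columns of the coordinates in \<open>S\<close>. The rank of a matrix of polynomials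
  is maximal at algebraically independent points; hence \<open>k\<^sub>i \<ge> dim K{0..i-1}\<close>,
  \<open>k\<^sub>i\<^sub>+\<^sub>2 = dim K{0..i+1}\<close>, and \<open>k\<^sub>i\<^sub>+\<^sub>1\<close> is at most the dimension of \<open>K{0..i}\<close> and, after swapping
  two coordinates, of \<open>K{0..i-1, i+1}\<close>. These two kernels meet in \<open>K{0..i-1}\<close>, so Grassmann's
  formula gives the claim once their sum is a proper subspace of \<open>K{0..i+1}\<close>. The infinitesimal
  rotation in the plane of the coordinates \<open>i\<close> and \<open>i+1\<close> is not in the sum: otherwise the rigidity
  matrix applied to its \<open>i\<close>-th coordinates would lie in the span of the columns of the first \<open>i\<close>
  coordinates. A nonzero self-stress, which exists because \<open>G\<close> is dependent in dimension
  \<open>d - 2 \<ge> i\<close>, rules this out at a special choice of the coordinates \<open>i\<close> and \<open>i+1\<close>, hence also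
  generically.
\<close>

section \<open>Algebraic independence and polynomial functions\<close>

lemma alg_indep_QI:
  assumes "\<And>S c. finite S \<Longrightarrow> \<forall>m\<in>S. \<forall>t. t \<notin> J \<longrightarrow> m t = 0 \<Longrightarrow>
      (\<Sum>m\<in>S. of_rat (c m) * (\<Prod>t\<in>J. x t ^ m t)) = 0 \<Longrightarrow> \<forall>m\<in>S. c m = 0"
  shows "alg_indep_Q J x"
  using assms unfolding alg_indep_Q_def by blast

lemma alg_indep_QD:
  assumes "alg_indep_Q J x" "finite S" "\<forall>m\<in>S. \<forall>t. t \<notin> J \<longrightarrow> m t = 0"
    "(\<Sum>m\<in>S. of_rat (c m) * (\<Prod>t\<in>J. x t ^ m t)) = 0" "m \<in> S"
  shows "c m = 0"
  using assms unfolding alg_indep_Q_def by blast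

lemma alg_indep_Q_subset:
  assumes "alg_indep_Q J x" "J' \<subseteq> J" "finite J"
  shows "alg_indep_Q J' x"
proof (rule alg_indep_QI)
  fix S :: "('a \<Rightarrow> nat) set" and c :: "('a \<Rightarrow> nat) \<Rightarrow> rat"
  assume S: "finite S" "\<forall>m\<in>S. \<forall>t. t \<notin> J' \<longrightarrow> m t = 0"
    and sum0: "(\<Sum>m\<in>S. of_rat (c m) * (\<Prod>t\<in>J'. x t ^ m t)) = 0"
  have "(\<Prod>t\<in>J. x t ^ m t) = (\<Prod>t\<in>J'. x t ^ m t)" if "m \<in> S" for m
    using S(2) that assms(2,3) by (intro prod.mono_neutral_right) auto
  then have "(\<Sum>m\<in>S. of_rat (c m) * (\<Prod>t\<in>J. x t ^ m t)) = 0"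
    using sum0 by (metis (no_types, lifting) sum.cong)
  moreover have "\<forall>m\<in>S. \<forall>t. t \<notin> J \<longrightarrow> m t = 0" using S(2) assms(2) by blast
  ultimately show "\<forall>m\<in>S. c m = 0" using alg_indep_QD[OF assms(1) S(1)] by blast
qed

lemma alg_indep_Q_of_real:
  assumes "alg_indep_Q J (x :: 'a \<Rightarrow> real)"
  shows "alg_indep_Q J (\<lambda>t. complex_of_real (x t))"
proof (rule alg_indep_QI)
  fix S :: "('a \<Rightarrow> nat) set" and c :: "('a \<Rightarrow> nat) \<Rightarrow> rat"
  assume S: "finite S" "\<forall>m\<in>S. \<forall>t. t \<notin> J \<longrightarrow> m t = 0"
    and sum0: "(\<Sum>m\<in>S. of_rat (c m) * (\<Prod>t\<in>J. complex_of_real (x t) ^ m t)) = 0"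
  have "of_rat q = complex_of_real (of_rat q)" for q by (cases q) (simp add: of_rat_rat)
  then have "complex_of_real (\<Sum>m\<in>S. of_rat (c m) * (\<Prod>t\<in>J. x t ^ m t)) = 0"
    using sum0 by (simp add: of_real_sum of_real_prod)
  then have "(\<Sum>m\<in>S. of_rat (c m) * (\<Prod>t\<in>J. x t ^ m t)) = 0"
    by (simp only: of_real_eq_0_iff)
  then show "\<forall>m\<in>S. c m = 0" using alg_indep_QD[OF assms S] by blast
qed

definition rat_poly_fun :: "'t set \<Rightarrow> (('t \<Rightarrow> 'a::field_char_0) \<Rightarrow> 'a) \<Rightarrow> bool" where
  "rat_poly_fun V f \<longleftrightarrow> (\<exists>S c. finite S \<and> (\<forall>m\<in>S. \<forall>t. t \<notin> V \<longrightarrow> m t = 0) \<and>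
     (\<forall>x. f x = (\<Sum>m\<in>S. of_rat (c m) * (\<Prod>t\<in>V. x t ^ m t))))"

lemma rat_poly_fun_eq_0_if_alg_indep:
  assumes "rat_poly_fun V f" "alg_indep_Q V x" "f x = 0"
  shows "f y = 0"
proof -
  obtain S c where S: "finite S" "\<forall>m\<in>S. \<forall>t. t \<notin> V \<longrightarrow> m t = 0"
    and f: "\<And>x. f x = (\<Sum>m\<in>S. of_rat (c m) * (\<Prod>t\<in>V. x t ^ m t))"
    using assms(1) unfolding rat_poly_fun_def by blast
  have "\<forall>m\<in>S. c m = 0"
    using alg_indep_QD[OF assms(2) S] assms(3) unfolding f by blast
  then show ?thesis by (simp add: f)
qed

lemma rat_poly_fun_const: "rat_poly_fun V (\<lambda>x. of_rat q)"
  unfolding rat_poly_fun_def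
  by (intro exI[of _ "{\<lambda>t. 0}"] exI[of _ "\<lambda>_. q"]) simp

lemma rat_poly_fun_var:
  fixes V :: "'t set"
  assumes "finite V" "t \<in> V"
  shows "rat_poly_fun V (\<lambda>x. x t)"
  unfolding rat_poly_fun_def
proof (intro exI[of _ "{\<lambda>s. if s = t then 1 else 0}"] exI[of _ "\<lambda>_. 1"] conjI allI)
  fix x :: "'t \<Rightarrow> 'a::field_char_0"
  have "(\<Prod>s\<in>V. x s ^ (if s = t then 1 else 0)) = x t"
    using assms by (simp add: if_distrib[of "power _"] prod.delta' cong: if_cong)
  then show "x t = (\<Sum>m\<in>{\<lambda>s. if s = t then 1 else 0}. of_rat 1 * (\<Prod>s\<in>V. x s ^ m s))"
    by simp
qed (use assms in auto)

lemma rat_poly_fun_add: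
  assumes "rat_poly_fun V f" "rat_poly_fun V g"
  shows "rat_poly_fun V (\<lambda>x. f x + g x)"
proof -
  obtain S1 c1 where S1: "finite S1" "\<forall>m\<in>S1. \<forall>t. t \<notin> V \<longrightarrow> m t = 0"
    and f: "\<And>x. f x = (\<Sum>m\<in>S1. of_rat (c1 m) * (\<Prod>t\<in>V. x t ^ m t))"
    using assms(1) unfolding rat_poly_fun_def by blast
  obtain S2 c2 where S2: "finite S2" "\<forall>m\<in>S2. \<forall>t. t \<notin> V \<longrightarrow> m t = 0"
    and g: "\<And>x. g x = (\<Sum>m\<in>S2. of_rat (c2 m) * (\<Prod>t\<in>V. x t ^ m t))"
    using assms(2) unfolding rat_poly_fun_def by blast
  define c where "c m = (if m \<in> S1 then c1 m else 0) + (if m \<in> S2 then c2 m else 0)" for m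
  have "f x + g x = (\<Sum>m\<in>S1 \<union> S2. of_rat (c m) * (\<Prod>t\<in>V. x t ^ m t))" for x
  proof -
    have "(\<Sum>m\<in>S1 \<union> S2. of_rat (c m) * (\<Prod>t\<in>V. x t ^ m t)) =
      (\<Sum>m\<in>S1 \<union> S2. if m \<in> S1 then of_rat (c1 m) * (\<Prod>t\<in>V. x t ^ m t) else 0) +
      (\<Sum>m\<in>S1 \<union> S2. if m \<in> S2 then of_rat (c2 m) * (\<Prod>t\<in>V. x t ^ m t) else 0)"
      unfolding c_def sum.distrib[symmetric] by (rule sum.cong) (auto simp: of_rat_add distrib_right)
    also have "\<dots> = f x + g x"
      unfolding f g sum.If_cases[OF finite_UnI[OF S1(1) S2(1)]]
      by (simp add: Int_absorb1 Int_absorb2)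
    finally show ?thesis by simp
  qed
  then show ?thesis
    unfolding rat_poly_fun_def using S1 S2 by (intro exI[of _ "S1 \<union> S2"] exI[of _ c]) auto
qed

lemma rat_poly_fun_mult:
  fixes V :: "'t set"
  assumes "rat_poly_fun V f" "rat_poly_fun V g"
  shows "rat_poly_fun V (\<lambda>x. f x * g x)"
proof -
  obtain S1 c1 where S1: "finite S1" "\<forall>m\<in>S1. \<forall>t. t \<notin> V \<longrightarrow> m t = 0"
    and f: "\<And>x. f x = (\<Sum>m\<in>S1. of_rat (c1 m) * (\<Prod>t\<in>V. x t ^ m t))"
    using assms(1) unfolding rat_poly_fun_def by blast
  obtain S2 c2 where S2: "finite S2" "\<forall>m\<in>S2. \<forall>t. t \<notin> V \<longrightarrow> m t = 0"
    and g: "\<And>x. g x = (\<Sum>m\<in>S2. of_rat (c2 m) * (\<Prod>t\<in>V. x t ^ m t))"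
    using assms(2) unfolding rat_poly_fun_def by blast
  define h where "h = (\<lambda>(a :: 't \<Rightarrow> nat, b) t. a t + b t)"
  define c where "c m = (\<Sum>ab\<in>{ab \<in> S1 \<times> S2. h ab = m}. c1 (fst ab) * c2 (snd ab))" for m
  have fin: "finite (S1 \<times> S2)" using S1(1) S2(1) by simp
  have "f x * g x = (\<Sum>m\<in>h ` (S1 \<times> S2). of_rat (c m) * (\<Prod>t\<in>V. x t ^ m t))" for x
  proof -
    have "f x * g x = (\<Sum>ab\<in>S1 \<times> S2. of_rat (c1 (fst ab) * c2 (snd ab)) * (\<Prod>t\<in>V. x t ^ h ab t))"
      unfolding f g sum_product sum.cartesian_product
      by (rule sum.cong) (auto simp: h_def power_add prod.distrib of_rat_mult)
    also have "\<dots> = (\<Sum>m\<in>h ` (S1 \<times> S2). \<Sum>ab\<in>{ab \<in> S1 \<times> S2. h ab = m}.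
                       of_rat (c1 (fst ab) * c2 (snd ab)) * (\<Prod>t\<in>V. x t ^ h ab t))"
      by (rule sum.group[symmetric]) (use fin in auto)
    also have "\<dots> = (\<Sum>m\<in>h ` (S1 \<times> S2). of_rat (c m) * (\<Prod>t\<in>V. x t ^ m t))"
      unfolding c_def of_rat_sum sum_distrib_right by (rule sum.cong) auto
    finally show ?thesis .
  qed
  moreover have "\<forall>m\<in>h ` (S1 \<times> S2). \<forall>t. t \<notin> V \<longrightarrow> m t = 0"
    using S1(2) S2(2) by (auto simp: h_def)
  ultimately show ?thesis
    unfolding rat_poly_fun_def using fin by blast
qed

lemma rat_poly_fun_diff:
  assumes "rat_poly_fun V f" "rat_poly_fun V g"
  shows "rat_poly_fun V (\<lambda>x. f x - g x)"
  using rat_poly_fun_add[OF assms(1) rat_poly_fun_mult[OF rat_poly_fun_const[of V "-1"] assms(2)]]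
  by simp

lemma rat_poly_fun_sum:
  assumes "finite A" "\<And>a. a \<in> A \<Longrightarrow> rat_poly_fun V (f a)"
  shows "rat_poly_fun V (\<lambda>x. \<Sum>a\<in>A. f a x)"
  using assms
  by (induction A rule: finite_induct)
     (auto intro: rat_poly_fun_add simp: rat_poly_fun_const[of V 0, simplified])

lemma rat_poly_fun_prod:
  assumes "finite A" "\<And>a. a \<in> A \<Longrightarrow> rat_poly_fun V (f a)"
  shows "rat_poly_fun V (\<lambda>x. \<Prod>a\<in>A. f a x)"
  using assms
  by (induction A rule: finite_induct)
     (auto intro: rat_poly_fun_mult simp: rat_poly_fun_const[of V 1, simplified])

section \<open>Finite linear systems\<close>

lemma homogeneous_system_nontrivial_solution:
  fixes a :: "'y \<Rightarrow> 'x \<Rightarrow> 'a::field"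
  assumes "finite Y" "finite X" "card Y < card X"
  shows "\<exists>l. (\<exists>x\<in>X. l x \<noteq> 0) \<and> (\<forall>y\<in>Y. (\<Sum>x\<in>X. a y x * l x) = 0)"
  using assms
proof (induction Y arbitrary: X a rule: finite_induct)
  case empty
  then obtain x0 where "x0 \<in> X" by fastforce
  then show ?case by (intro exI[of _ "\<lambda>_. 1"]) auto
next
  case (insert y0 Y)
  show ?case
  proof (cases "\<forall>x\<in>X. a y0 x = 0")
    case True
    then show ?thesis
      using insert.IH[OF insert.prems(1)] insert.hyps insert.prems(2) by auto
  next
    case False
    then obtain x0 where x0: "x0 \<in> X" "a y0 x0 \<noteq> 0" by blast
    define a' where "a' y x = a y x - a y x0 * a y0 x / a y0 x0" for y x
    have "card Y < card (X - {x0})" using insert x0 by simp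
    then obtain l' where l': "\<exists>x\<in>X - {x0}. l' x \<noteq> 0" "\<forall>y\<in>Y. (\<Sum>x\<in>X - {x0}. a' y x * l' x) = 0"
      using insert.IH[of "X - {x0}"] insert.prems(1) by blast
    define s where "s = (\<Sum>x\<in>X - {x0}. a y0 x * l' x)"
    define l where "l x = (if x = x0 then - s / a y0 x0 else l' x)" for x
    have sum_l: "(\<Sum>x\<in>X. a y x * l x) = a y x0 * l x0 + (\<Sum>x\<in>X - {x0}. a y x * l' x)" for y
      using x0 insert.prems(1) by (simp add: sum.remove[of X x0] l_def)
    have "(\<Sum>x\<in>X. a y x * l x) = 0" if "y \<in> insert y0 Y" for y
    proof (cases "y = y0")
      case True
      have "(\<Sum>x\<in>X. a y0 x * l x) = a y0 x0 * l x0 + s" unfolding s_def by (rule sum_l)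
      then show ?thesis using True x0 by (simp add: l_def)
    next
      case False
      then have "y \<in> Y" using that by simp
      have "(\<Sum>x\<in>X - {x0}. a' y x * l' x) = (\<Sum>x\<in>X - {x0}. a y x * l' x) - a y x0 / a y0 x0 * s"
        unfolding a'_def s_def
        by (simp add: algebra_simps sum_subtractf sum_distrib_left sum_divide_distrib)
      then have "(\<Sum>x\<in>X - {x0}. a y x * l' x) = a y x0 * s / a y0 x0"
        using l'(2) \<open>y \<in> Y\<close> by simp
      then show ?thesis using sum_l[of y] x0 by (simp add: l_def)
    qed
    moreover have "\<exists>x\<in>X. l x \<noteq> 0" using l'(1) by (auto simp: l_def)
    ultimately show ?thesis by blast
  qed
qed

definition indep_on_coords :: "'c set \<Rightarrow> 'r set \<Rightarrow> ('c \<Rightarrow> 'r \<Rightarrow> 'a::field) \<Rightarrow> bool" where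
  "indep_on_coords J R v \<longleftrightarrow> (\<forall>l. (\<forall>e\<in>R. (\<Sum>c\<in>J. l c * v c e) = 0) \<longrightarrow> (\<forall>c\<in>J. l c = 0))"

lemma indep_on_coords_mono:
  "indep_on_coords J I v \<Longrightarrow> I \<subseteq> R \<Longrightarrow> indep_on_coords J R v"
  unfolding indep_on_coords_def by blast

lemma indep_on_coords_card_le:
  assumes "finite J" "finite R" "indep_on_coords J R v"
  shows "card J \<le> card R"
proof (rule ccontr)
  assume "\<not> card J \<le> card R"
  then obtain l where "\<exists>c\<in>J. l c \<noteq> 0" "\<forall>e\<in>R. (\<Sum>c\<in>J. v c e * l c) = 0"
    using homogeneous_system_nontrivial_solution[of R J "\<lambda>e c. v c e"] assms by auto
  then show False using assms(3) unfolding indep_on_coords_def by (auto simp: mult.commute)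
qed

lemma indep_on_coords_square:
  fixes v :: "'c \<Rightarrow> 'r \<Rightarrow> 'a::field"
  assumes "finite J" "finite R" "indep_on_coords J R v"
  obtains I where "I \<subseteq> R" "card I = card J" "indep_on_coords J I v"
proof -
  obtain I where I: "I \<subseteq> R" "indep_on_coords J I v"
    and I_min: "\<And>I'. I' \<subseteq> R \<Longrightarrow> indep_on_coords J I' v \<Longrightarrow> card I \<le> card I'"
    using ex_has_least_nat[of "\<lambda>I. I \<subseteq> R \<and> indep_on_coords J I v" R card] assms by blast
  have "finite I" using I(1) assms(2) finite_subset by blast
  have "card I \<le> card J"
  proof (rule ccontr)
    assume "\<not> card I \<le> card J"
    \<comment> \<open>By minimality, for each \<open>e \<in> I\<close> some combination vanishes on \<open>I - {e}\<close> but not at \<open>e\<close>;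
      a dependence among the columns in \<open>I\<close> then cannot exist.\<close>
    have "\<exists>l. (\<forall>e'\<in>I - {e}. (\<Sum>c\<in>J. l c * v c e') = 0) \<and> (\<Sum>c\<in>J. l c * v c e) \<noteq> 0"
      if e: "e \<in> I" for e
    proof -
      have "card (I - {e}) < card I" using card_Diff1_less[OF \<open>finite I\<close> e] .
      then have "\<not> indep_on_coords J (I - {e}) v" using I_min[of "I - {e}"] I(1) by auto
      then obtain l where l: "\<forall>e'\<in>I - {e}. (\<Sum>c\<in>J. l c * v c e') = 0" "\<exists>c\<in>J. l c \<noteq> 0"
        unfolding indep_on_coords_def by blast
      then have "(\<Sum>c\<in>J. l c * v c e) \<noteq> 0"
        using I(2) e unfolding indep_on_coords_def by (metis insert_Diff insert_iff)
      with l(1) show ?thesis by blast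
    qed
    then obtain L where L: "\<And>e. e \<in> I \<Longrightarrow> \<forall>e'\<in>I - {e}. (\<Sum>c\<in>J. L e c * v c e') = 0"
      "\<And>e. e \<in> I \<Longrightarrow> (\<Sum>c\<in>J. L e c * v c e) \<noteq> 0"
      by metis
    obtain mu where mu: "\<exists>e\<in>I. mu e \<noteq> 0" "\<forall>c\<in>J. (\<Sum>e\<in>I. v c e * mu e) = 0"
      using homogeneous_system_nontrivial_solution[OF assms(1) \<open>finite I\<close>, of v]
        \<open>\<not> card I \<le> card J\<close> by auto
    then obtain e0 where e0: "e0 \<in> I" "mu e0 \<noteq> 0" by blast
    have "0 = (\<Sum>c\<in>J. L e0 c * (\<Sum>e\<in>I. v c e * mu e))" using mu(2) by simp
    also have "\<dots> = (\<Sum>e\<in>I. mu e * (\<Sum>c\<in>J. L e0 c * v c e))"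
      by (simp add: sum_distrib_left algebra_simps sum.swap[of _ J I])
    also have "\<dots> = mu e0 * (\<Sum>c\<in>J. L e0 c * v c e0)"
      using L(1)[OF e0(1)] e0(1) \<open>finite I\<close> by (simp add: sum.remove[of I e0])
    finally show False using L(2)[OF e0(1)] e0(2) by simp
  qed
  with indep_on_coords_card_le[OF assms(1) \<open>finite I\<close> I(2)] I that show ?thesis by simp
qed

lemma indep_on_coords_if_det_ne_0:
  fixes A :: "'r \<Rightarrow> 'c \<Rightarrow> 'a::field"
  assumes f: "bij_betw f {0..<s} I" and g: "bij_betw g {0..<s} J"
    and det: "det (mat s s (\<lambda>(a, b). A (f a) (g b))) \<noteq> 0"
  shows "indep_on_coords J I (\<lambda>c e. A e c)"
  unfolding indep_on_coords_def
proof (intro allI impI ballI)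
  fix l c assume l: "\<forall>e\<in>I. (\<Sum>c\<in>J. l c * A e c) = 0" and c: "c \<in> J"
  define M where "M = mat s s (\<lambda>(a, b). A (f a) (g b))"
  define v where "v = vec s (\<lambda>b. l (g b))"
  have M: "M \<in> carrier_mat s s" unfolding M_def by simp
  have "M *\<^sub>v v = 0\<^sub>v s"
  proof (rule eq_vecI)
    fix a assume "a < dim_vec (0\<^sub>v s)"
    then have a: "a < s" by simp
    then have "(M *\<^sub>v v) $ a = (\<Sum>b\<in>{0..<s}. l (g b) * A (f a) (g b))"
      unfolding M_def v_def by (auto simp: scalar_prod_def mult.commute intro!: sum.cong)
    also have "\<dots> = (\<Sum>c\<in>J. l c * A (f a) c)"
      using sum.reindex_bij_betw[OF g, of "\<lambda>c. l c * A (f a) c"] by simp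
    also have "\<dots> = 0" using l a f by (auto simp: bij_betw_def)
    finally show "(M *\<^sub>v v) $ a = 0\<^sub>v s $ a" using a by simp
  qed (use M in simp)
  moreover have "v \<in> carrier_vec s" unfolding v_def by simp
  ultimately have "v = 0\<^sub>v s" using det det_0_iff_vec_prod_zero[OF M] unfolding M_def by blast
  moreover obtain b where "b < s" "g b = c" using g c by (auto simp: bij_betw_def)
  ultimately show "l c = 0" unfolding v_def by (metis index_vec index_zero_vec(1))
qed

lemma det_ne_0_if_indep_on_coords:
  fixes A :: "'r \<Rightarrow> 'c \<Rightarrow> 'a::field"
  assumes f: "bij_betw f {0..<s} I" and g: "bij_betw g {0..<s} J"
    and indep: "indep_on_coords J I (\<lambda>c e. A e c)"
  shows "det (mat s s (\<lambda>(a, b). A (f a) (g b))) \<noteq> 0"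
proof
  define M where "M = mat s s (\<lambda>(a, b). A (f a) (g b))"
  have M: "M \<in> carrier_mat s s" unfolding M_def by simp
  assume "det (mat s s (\<lambda>(a, b). A (f a) (g b))) = 0"
  then obtain v where v: "v \<in> carrier_vec s" "v \<noteq> 0\<^sub>v s" "M *\<^sub>v v = 0\<^sub>v s"
    using det_0_iff_vec_prod_zero[OF M] unfolding M_def by blast
  define l where "l c = v $ the_inv_into {0..<s} g c" for c
  have l_g: "l (g b) = v $ b" if "b < s" for b
    unfolding l_def using g that by (simp add: bij_betw_def the_inv_into_f_f)
  have "(\<Sum>c\<in>J. l c * A e c) = 0" if "e \<in> I" for e
  proof -
    obtain a where a: "a < s" "f a = e" using f \<open>e \<in> I\<close> by (auto simp: bij_betw_def)
    have "(\<Sum>c\<in>J. l c * A e c) = (\<Sum>b\<in>{0..<s}. l (g b) * A e (g b))"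
      using sum.reindex_bij_betw[OF g, of "\<lambda>c. l c * A e c"] by simp
    also have "\<dots> = (M *\<^sub>v v) $ a"
      using a l_g v(1) unfolding M_def by (auto simp: scalar_prod_def mult.commute intro!: sum.cong)
    finally show ?thesis using v(3) a(1) by simp
  qed
  then have "\<forall>c\<in>J. l c = 0" using indep unfolding indep_on_coords_def by blast
  then have "v = 0\<^sub>v s" using l_g g v(1) by (intro eq_vecI) (auto simp: bij_betw_def)
  then show False using v(2) by simp
qed

lemma rat_poly_fun_det:
  assumes "\<And>a b. a < s \<Longrightarrow> b < s \<Longrightarrow> rat_poly_fun V (\<lambda>x. F x a b)"
  shows "rat_poly_fun V (\<lambda>x. det (mat s s (\<lambda>(a, b). F x a b)))"
proof -
  have "rat_poly_fun V (\<lambda>x. \<Sum>p\<in>{p. p permutes {0..<s}}. of_int (sign p) * (\<Prod>a\<in>{0..<s}. F x a (p a)))"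
  proof (intro rat_poly_fun_sum rat_poly_fun_mult rat_poly_fun_prod assms)
    fix p a assume "p \<in> {p. p permutes {0..<s}}" "a \<in> {0..<s}"
    then show "p a < s" using permutes_in_image by fastforce
  qed (use rat_poly_fun_const[of V "of_int _"] finite_permutations in auto)
  moreover have "(\<Sum>p\<in>{p. p permutes {0..<s}}. of_int (sign p) * (\<Prod>a\<in>{0..<s}. F x a (p a))) =
      det (mat s s (\<lambda>(a, b). F x a b))" for x
    unfolding det_def by (auto intro!: sum.cong prod.cong simp: permutes_in_image)
  ultimately show ?thesis by simp
qed

lemma indep_cols_generic:
  fixes A :: "('t \<Rightarrow> complex) \<Rightarrow> 'r \<Rightarrow> 'c \<Rightarrow> complex"
  assumes "finite J" "finite R"
    and poly: "\<And>e c. e \<in> R \<Longrightarrow> c \<in> J \<Longrightarrow> rat_poly_fun V (\<lambda>x. A x e c)"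
    and "alg_indep_Q V x" "indep_on_coords J R (\<lambda>c e. A y e c)"
  shows "indep_on_coords J R (\<lambda>c e. A x e c)"
proof -
  obtain I where I: "I \<subseteq> R" "card I = card J" "indep_on_coords J I (\<lambda>c e. A y e c)"
    using indep_on_coords_square[OF assms(1,2,5)] by blast
  then have "finite I" using assms(2) finite_subset by blast
  obtain f where f: "bij_betw f {0..<card J} I" using ex_bij_betw_nat_finite[OF \<open>finite I\<close>] I(2) by auto
  obtain g where g: "bij_betw g {0..<card J} J" using ex_bij_betw_nat_finite[OF assms(1)] by auto
  have "rat_poly_fun V (\<lambda>x. det (mat (card J) (card J) (\<lambda>(a, b). A x (f a) (g b))))"
  proof (rule rat_poly_fun_det)
    fix a b assume "a < card J" "b < card J"
    then have "f a \<in> R" "g b \<in> J" using f g I(1) by (auto simp: bij_betw_def)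
    then show "rat_poly_fun V (\<lambda>x. A x (f a) (g b))" using poly by blast
  qed
  moreover have "det (mat (card J) (card J) (\<lambda>(a, b). A y (f a) (g b))) \<noteq> 0"
    using det_ne_0_if_indep_on_coords[OF f g I(3)] .
  ultimately have "det (mat (card J) (card J) (\<lambda>(a, b). A x (f a) (g b))) \<noteq> 0"
    using rat_poly_fun_eq_0_if_alg_indep assms(4) by blast
  then show ?thesis
    using indep_on_coords_if_det_ne_0[OF f g] indep_on_coords_mono I(1) by blast
qed

section \<open>Finitely supported arrays\<close>

interpretation VS: vector_space cscale
  by unfold_locales (auto simp: cscale_def fun_eq_iff algebra_simps plus_fun_def)

lemma sum_cscale_apply: "(\<Sum>b\<in>B. cscale (l b) (F b)) w j = (\<Sum>b\<in>B. l b * F b w j)"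
  by (induction B rule: infinite_finite_induct) (auto simp: cscale_def)

definition coord :: "(nat \<Rightarrow> nat \<Rightarrow> complex) \<Rightarrow> nat \<times> nat \<Rightarrow> complex" where
  "coord m c = m (fst c) (snd c)"

definition supported_on :: "(nat \<times> nat) set \<Rightarrow> (nat \<Rightarrow> nat \<Rightarrow> complex) set" where
  "supported_on Cl = {m. \<forall>w j. (w, j) \<notin> Cl \<longrightarrow> m w j = 0}"

definition unit_array :: "nat \<times> nat \<Rightarrow> nat \<Rightarrow> nat \<Rightarrow> complex" where
  "unit_array c = (\<lambda>w j. if (w, j) = c then 1 else 0)"

lemma supported_on_subset_span:
  assumes "finite Cl"
  shows "supported_on Cl \<subseteq> VS.span (unit_array ` Cl)"
proof
  fix m assume m: "m \<in> supported_on Cl"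
  have "(\<Sum>c\<in>Cl. coord m c * unit_array c w j) = m w j" for w j
    using assms m unfolding unit_array_def supported_on_def
    by (simp add: coord_def if_distrib[of "\<lambda>z. _ * z"] sum.delta' cong: if_cong)
  then have "m = (\<Sum>c\<in>Cl. cscale (coord m c) (unit_array c))"
    by (simp add: fun_eq_iff sum_cscale_apply)
  also have "\<dots> \<in> VS.span (unit_array ` Cl)"
    by (intro VS.span_sum VS.span_scale VS.span_base) auto
  finally show "m \<in> VS.span (unit_array ` Cl)" .
qed

lemma supported_basis_exists:
  assumes "finite Cl" "W \<subseteq> supported_on Cl"
  obtains B where "B \<subseteq> W" "VS.independent B" "W \<subseteq> VS.span B" "finite B" "card B = VS.dim W"
proof -
  obtain B where B: "B \<subseteq> W" "VS.independent B" "W \<subseteq> VS.span B" "card B = VS.dim W"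
    using VS.basis_exists by blast
  have "B \<subseteq> VS.span (unit_array ` Cl)" using B(1) assms supported_on_subset_span by blast
  then have "finite B" using VS.independent_span_bound[of "unit_array ` Cl" B] assms(1) B(2) by auto
  then show ?thesis using B that by blast
qed

lemma supported_independent_card_le_dim:
  assumes "finite Cl" "W \<subseteq> supported_on Cl" "VS.independent B" "B \<subseteq> VS.span W"
  shows "finite B" "card B \<le> VS.dim W"
proof -
  obtain BW where BW: "BW \<subseteq> W" "VS.independent BW" "W \<subseteq> VS.span BW" "finite BW"
      "card BW = VS.dim W"
    using supported_basis_exists[OF assms(1,2)] .
  have "VS.span W \<subseteq> VS.span BW"
    using BW(3) VS.span_minimal[OF _ VS.subspace_span] by blast
  then have "B \<subseteq> VS.span BW" using assms(4) by blast
  then show "finite B" "card B \<le> VS.dim W"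
    using VS.independent_span_bound[OF BW(4) assms(3)] BW(5) by simp_all
qed

lemma supported_dim_mono:
  assumes "finite Cl" "W \<subseteq> supported_on Cl" "U \<subseteq> W"
  shows "VS.dim U \<le> VS.dim W"
proof -
  obtain B where B: "B \<subseteq> U" "VS.independent B" "U \<subseteq> VS.span B" "finite B" "card B = VS.dim U"
    using supported_basis_exists[OF assms(1) subset_trans[OF assms(3,2)]] .
  have "B \<subseteq> VS.span W" using B(1) assms(3) VS.span_superset by blast
  then show ?thesis
    using supported_independent_card_le_dim(2)[OF assms(1,2) B(2)] B(5) by simp
qed

lemma supported_dim_pos_iff:
  assumes "finite Cl" "W \<subseteq> supported_on Cl"
  shows "0 < VS.dim W \<longleftrightarrow> (\<exists>w\<in>W. w \<noteq> 0)"
proof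
  assume "0 < VS.dim W"
  show "\<exists>w\<in>W. w \<noteq> 0"
  proof (rule ccontr)
    assume "\<not> (\<exists>w\<in>W. w \<noteq> 0)"
    then have "W \<subseteq> VS.span {}" by (auto simp: VS.span_empty)
    then show False using VS.dim_le_card[OF _ finite.emptyI] \<open>0 < VS.dim W\<close> by fastforce
  qed
next
  assume "\<exists>w\<in>W. w \<noteq> 0"
  then obtain w where "w \<in> W" "w \<noteq> 0" by blast
  then have "VS.independent {w}" "{w} \<subseteq> VS.span W" using VS.span_superset by auto
  then show "0 < VS.dim W" using supported_independent_card_le_dim(2)[OF assms] by fastforce
qed

lemma supported_dim_linear_image_le:
  assumes "finite Cl" "W \<subseteq> supported_on Cl" "Vector_Spaces.linear cscale cscale f"
  shows "VS.dim (f ` W) \<le> VS.dim W"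
proof -
  interpret f: Vector_Spaces.linear cscale cscale f by fact
  obtain B where B: "W \<subseteq> VS.span B" "finite B" "card B = VS.dim W"
    using supported_basis_exists[OF assms(1,2)] by metis
  have "f ` W \<subseteq> f ` VS.span B" using B(1) by (rule image_mono)
  also have "\<dots> = VS.span (f ` B)" by (rule f.span_image[symmetric])
  finally have "f ` W \<subseteq> VS.span (f ` B)" .
  then have "VS.dim (f ` W) \<le> card (f ` B)" using VS.dim_le_card B(2) by blast
  also have "\<dots> \<le> card B" using B(2) card_image_le by blast
  finally show ?thesis using B(3) by simp
qed

lemma supported_independent_indep_on_coords:
  assumes "B \<subseteq> supported_on Cl" "VS.independent B" "finite B"
  shows "indep_on_coords B Cl coord"
  unfolding indep_on_coords_def
proof (intro allI impI)
  fix l assume l: "\<forall>c\<in>Cl. (\<Sum>b\<in>B. l b * coord b c) = 0"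
  have "(\<Sum>b\<in>B. cscale (l b) b) = 0"
  proof (intro ext)
    fix w j
    show "(\<Sum>b\<in>B. cscale (l b) b) w j = 0 w j"
    proof (cases "(w, j) \<in> Cl")
      case True
      then show ?thesis using l unfolding sum_cscale_apply by (force simp: coord_def)
    next
      case False
      then show ?thesis
        using assms(1) unfolding sum_cscale_apply supported_on_def by (auto intro!: sum.neutral)
    qed
  qed
  then show "\<forall>b\<in>B. l b = 0" using assms(2,3) unfolding VS.independent_explicit_module by blast
qed

lemma independent_disjoint_span_Int_eq_0:
  assumes "VS.independent (X \<union> Y)" "finite X" "finite Y" "X \<inter> Y = {}"
    and "v \<in> VS.span X" "v \<in> VS.span Y"
  shows "v = 0"
proof -
  obtain a where a: "v = (\<Sum>x\<in>X. cscale (a x) x)" using assms(5) VS.span_finite[OF assms(2)] by auto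
  obtain b where b: "v = (\<Sum>x\<in>Y. cscale (b x) x)" using assms(6) VS.span_finite[OF assms(3)] by auto
  define g where "g z = (if z \<in> X then a z else - b z)" for z
  have "(\<Sum>z\<in>X \<union> Y. cscale (g z) z) = (\<Sum>z\<in>X. cscale (g z) z) + (\<Sum>z\<in>Y. cscale (g z) z)"
    by (rule sum.union_disjoint) (use assms in auto)
  also have "(\<Sum>z\<in>X. cscale (g z) z) = v" unfolding a g_def by simp
  also have "(\<Sum>z\<in>Y. cscale (g z) z) = (\<Sum>z\<in>Y. - cscale (b z) z)"
    using assms(4) by (intro sum.cong) (auto simp: g_def VS.scale_minus_left)
  also have "\<dots> = - v" unfolding b by (simp add: sum_negf)
  finally have "(\<Sum>z\<in>X \<union> Y. cscale (g z) z) = 0" by (simp add: fun_eq_iff)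
  then have "\<forall>z\<in>X \<union> Y. g z = 0" using VS.independentD[OF assms(1) _ order_refl] assms(2,3) by blast
  then have "\<forall>x\<in>X. a x = 0" unfolding g_def by (metis UnI1)
  then show ?thesis unfolding a by simp
qed

lemma independent_Un_if_span_Int_eq_0:
  assumes "VS.independent X" "VS.independent Y" "finite X" "finite Y" "X \<inter> Y = {}"
    and span_Int: "\<And>v. v \<in> VS.span X \<Longrightarrow> v \<in> VS.span Y \<Longrightarrow> v = 0"
  shows "VS.independent (X \<union> Y)"
proof (rule VS.independent_if_scalars_zero)
  show "finite (X \<union> Y)" using assms(3,4) by simp
  fix f x assume sum0: "(\<Sum>z\<in>X \<union> Y. cscale (f z) z) = 0" and x: "x \<in> X \<union> Y"
  define a where "a = (\<Sum>z\<in>X. cscale (f z) z)"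
  define b where "b = (\<Sum>z\<in>Y. cscale (f z) z)"
  have "a + b = 0" using sum0 unfolding a_def b_def sum.union_disjoint[OF assms(3,4,5)] .
  moreover have "a \<in> VS.span X" "b \<in> VS.span Y"
    unfolding a_def b_def by (intro VS.span_sum VS.span_scale VS.span_base; simp)+
  ultimately have "a = 0" "b = 0"
    using span_Int[of a] VS.span_neg[of b Y] by (simp_all add: eq_neg_iff_add_eq_0[symmetric])
  then show "f x = 0"
    using x VS.independentD[OF assms(1) assms(3) order_refl] VS.independentD[OF assms(2) assms(4) order_refl]
    unfolding a_def b_def by blast
qed

lemma independent_Un_extensions:
  assumes "B0 \<subseteq> Ba" "B0 \<subseteq> Bb" "VS.independent Ba" "VS.independent Bb" "finite Ba" "finite Bb"
    and span_Int: "VS.span Ba \<inter> VS.span Bb \<subseteq> VS.span B0"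
  shows "Ba \<inter> (Bb - B0) = {}" "VS.independent (Ba \<union> (Bb - B0))"
proof -
  have "x \<in> B0" if "x \<in> Ba" "x \<in> Bb" for x
  proof (rule ccontr)
    assume "x \<notin> B0"
    have "x \<in> VS.span B0" using that span_Int VS.span_superset by blast
    also have "VS.span B0 \<subseteq> VS.span (Ba - {x})" using assms(1) \<open>x \<notin> B0\<close> by (intro VS.span_mono) blast
    finally have "VS.dependent Ba" unfolding VS.dependent_def using \<open>x \<in> Ba\<close> by blast
    then show False using assms(3) by simp
  qed
  then show disjoint: "Ba \<inter> (Bb - B0) = {}" by blast
  have "v = 0" if "v \<in> VS.span Ba" "v \<in> VS.span (Bb - B0)" for v
  proof -
    have "v \<in> VS.span B0" using that span_Int VS.span_mono[of "Bb - B0" Bb] by blast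
    moreover have "VS.independent (B0 \<union> (Bb - B0))" using assms(2,4) by (simp add: Un_absorb1)
    ultimately show "v = 0"
      using independent_disjoint_span_Int_eq_0[of B0 "Bb - B0" v] that(2) assms(2,6) finite_subset
      by blast
  qed
  then show "VS.independent (Ba \<union> (Bb - B0))"
    using independent_Un_if_span_Int_eq_0[OF assms(3) VS.independent_mono[OF assms(4) Diff_subset]
        assms(5) finite_Diff[OF assms(6)] disjoint] by blast
qed

lemma supported_dim_Int_sums:
  assumes "finite Cl" "Sa \<subseteq> supported_on Cl" "Sb \<subseteq> supported_on Cl"
    and "VS.subspace Sa" "VS.subspace Sb"
  shows "VS.dim Sa + VS.dim Sb \<le> VS.dim {x + y |x y. x \<in> Sa \<and> y \<in> Sb} + VS.dim (Sa \<inter> Sb)"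
proof -
  define S where "S = {x + y |x y. x \<in> Sa \<and> y \<in> Sb}"
  have "x + y \<in> supported_on Cl" if "x \<in> Sa" "y \<in> Sb" for x y
    using that assms(2,3) by (auto simp: supported_on_def subset_iff)
  then have S_supported: "S \<subseteq> supported_on Cl" unfolding S_def by blast
  obtain B0 where B0: "B0 \<subseteq> Sa \<inter> Sb" "VS.independent B0" "Sa \<inter> Sb \<subseteq> VS.span B0" "finite B0"
      "card B0 = VS.dim (Sa \<inter> Sb)"
    using supported_basis_exists[OF assms(1), of "Sa \<inter> Sb"] assms(2) by blast
  obtain Ba where Ba: "B0 \<subseteq> Ba" "Ba \<subseteq> Sa" "VS.independent Ba" "Sa \<subseteq> VS.span Ba"
    using VS.maximal_independent_subset_extend[of B0 Sa] B0 by blast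
  obtain Bb where Bb: "B0 \<subseteq> Bb" "Bb \<subseteq> Sb" "VS.independent Bb" "Sb \<subseteq> VS.span Bb"
    using VS.maximal_independent_subset_extend[of B0 Sb] B0 by blast
  have "finite Ba"
    using supported_independent_card_le_dim(1)[OF assms(1,2) Ba(3)] Ba(2) VS.span_superset by blast
  have "finite Bb"
    using supported_independent_card_le_dim(1)[OF assms(1,3) Bb(3)] Bb(2) VS.span_superset by blast
  have "VS.span Ba = Sa" "VS.span Bb = Sb"
    using Ba Bb assms(4,5) VS.span_subspace by blast+
  then have disjoint: "Ba \<inter> (Bb - B0) = {}" and indep: "VS.independent (Ba \<union> (Bb - B0))"
    using independent_Un_extensions[OF Ba(1) Bb(1) Ba(3) Bb(3) \<open>finite Ba\<close> \<open>finite Bb\<close>] B0(3)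
    by simp_all
  have span_Sa: "VS.span Sa = Sa" and span_Sb: "VS.span Sb = Sb" using assms(4,5) by simp_all
  have "S = VS.span (Sa \<union> Sb)" unfolding S_def VS.span_Un span_Sa span_Sb by (rule refl)
  then have "Ba \<union> (Bb - B0) \<subseteq> VS.span S" using Ba(2) Bb(2) VS.span_superset by blast
  then have "card (Ba \<union> (Bb - B0)) \<le> VS.dim S"
    using supported_independent_card_le_dim(2)[OF assms(1) S_supported indep] by blast
  moreover have "card (Ba \<union> (Bb - B0)) = card Ba + (card Bb - card B0)"
    using disjoint \<open>finite Ba\<close> \<open>finite Bb\<close> Bb(1) B0(4)
    by (simp add: card_Un_disjoint card_Diff_subset)
  moreover have "card Ba = VS.dim Sa" "card Bb = VS.dim Sb"
    using VS.basis_card_eq_dim Ba Bb by blast+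
  moreover have "card B0 \<le> card Bb" using Bb(1) \<open>finite Bb\<close> card_mono by blast
  ultimately show ?thesis using B0(5) unfolding S_def by linarith
qed

lemma supported_dim_Suc_le_if_not_in_subspace:
  assumes "finite Cl" "K \<subseteq> supported_on Cl" "S \<subseteq> K" "VS.subspace S" "w \<in> K" "w \<notin> S"
  shows "VS.dim S + 1 \<le> VS.dim K"
proof -
  obtain B where B: "B \<subseteq> S" "VS.independent B" "S \<subseteq> VS.span B" "finite B" "card B = VS.dim S"
    using supported_basis_exists[OF assms(1), of S] assms(2,3) by blast
  have "w \<notin> VS.span B" using B(1) assms(4,6) VS.span_minimal by blast
  then have "VS.independent (insert w B)" using VS.independent_insertI B(2) by blast
  moreover have "insert w B \<subseteq> VS.span K" using B(1) assms(3,5) VS.span_superset by blast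
  ultimately have "card (insert w B) \<le> VS.dim K"
    using supported_independent_card_le_dim(2)[OF assms(1,2)] by blast
  moreover have "w \<notin> B" using \<open>w \<notin> VS.span B\<close> VS.span_superset by blast
  ultimately show ?thesis using B(4,5) by simp
qed

section \<open>Kernels of matrices on finite sets of columns\<close>

definition kernel_on :: "(nat \<times> nat) set \<Rightarrow> 'r set \<Rightarrow> ('r \<Rightarrow> nat \<times> nat \<Rightarrow> complex)
    \<Rightarrow> (nat \<Rightarrow> nat \<Rightarrow> complex) set" where
  "kernel_on Cl R A = {m \<in> supported_on Cl. \<forall>e\<in>R. (\<Sum>c\<in>Cl. A e c * coord m c) = 0}"

lemma kernel_on_subset_supported: "kernel_on Cl R A \<subseteq> supported_on Cl"
  by (simp add: kernel_on_def)

lemma kernel_on_subspace: "VS.subspace (kernel_on Cl R A)"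
proof -
  have "(\<Sum>c\<in>Cl. A e c * coord (cscale k m) c) = k * (\<Sum>c\<in>Cl. A e c * coord m c)" for e k m
    by (simp add: coord_def cscale_def sum_distrib_left algebra_simps)
  moreover have "(\<Sum>c\<in>Cl. A e c * coord (m + m') c) =
      (\<Sum>c\<in>Cl. A e c * coord m c) + (\<Sum>c\<in>Cl. A e c * coord m' c)" for e m m'
    by (simp add: coord_def sum.distrib algebra_simps)
  moreover have "coord 0 c = 0" for c by (simp add: coord_def)
  ultimately show ?thesis
    unfolding VS.subspace_def kernel_on_def supported_on_def by (simp add: cscale_def)
qed

lemma kernel_on_cong:
  "(\<And>e c. e \<in> R \<Longrightarrow> c \<in> Cl \<Longrightarrow> A e c = B e c) \<Longrightarrow> kernel_on Cl R A = kernel_on Cl R B"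
  unfolding kernel_on_def by auto

lemma sum_supported_on_subset:
  assumes "m \<in> supported_on Cl'" "Cl' \<subseteq> Cl" "finite Cl"
  shows "(\<Sum>c\<in>Cl. A e c * coord m c) = (\<Sum>c\<in>Cl'. A e c * coord m c)"
  by (rule sum.mono_neutral_right) (use assms in \<open>auto simp: supported_on_def coord_def\<close>)

lemma kernel_on_mono:
  assumes "Cl' \<subseteq> Cl" "finite Cl"
  shows "kernel_on Cl' R A \<subseteq> kernel_on Cl R A"
proof
  fix m assume m: "m \<in> kernel_on Cl' R A"
  then have "m \<in> supported_on Cl'" by (simp add: kernel_on_def)
  then have "m \<in> supported_on Cl" using assms(1) by (auto simp: supported_on_def)
  moreover have "(\<Sum>c\<in>Cl. A e c * coord m c) = 0" if "e \<in> R" for e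
    using sum_supported_on_subset[OF \<open>m \<in> supported_on Cl'\<close> assms, of A e] m that
    by (simp add: kernel_on_def)
  ultimately show "m \<in> kernel_on Cl R A" by (simp add: kernel_on_def)
qed

lemma kernel_on_Int:
  assumes "finite Cl1" "finite Cl2"
  shows "kernel_on Cl1 R A \<inter> kernel_on Cl2 R A = kernel_on (Cl1 \<inter> Cl2) R A"
proof
  show "kernel_on Cl1 R A \<inter> kernel_on Cl2 R A \<subseteq> kernel_on (Cl1 \<inter> Cl2) R A"
  proof
    fix m assume m: "m \<in> kernel_on Cl1 R A \<inter> kernel_on Cl2 R A"
    then have "m \<in> supported_on (Cl1 \<inter> Cl2)" by (auto simp: kernel_on_def supported_on_def)
    moreover have "(\<Sum>c\<in>Cl1 \<inter> Cl2. A e c * coord m c) = 0" if "e \<in> R" for e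
      using sum_supported_on_subset[OF \<open>m \<in> supported_on (Cl1 \<inter> Cl2)\<close> Int_lower1 assms(1), of A e]
        m that by (simp add: kernel_on_def)
    ultimately show "m \<in> kernel_on (Cl1 \<inter> Cl2) R A" by (simp add: kernel_on_def)
  qed
  show "kernel_on (Cl1 \<inter> Cl2) R A \<subseteq> kernel_on Cl1 R A \<inter> kernel_on Cl2 R A"
    using kernel_on_mono[OF Int_lower1 assms(1)] kernel_on_mono[OF Int_lower2 assms(2)] by blast
qed

definition reindex_array :: "(nat \<times> nat \<Rightarrow> nat \<times> nat) \<Rightarrow> (nat \<Rightarrow> nat \<Rightarrow> complex)
    \<Rightarrow> nat \<Rightarrow> nat \<Rightarrow> complex" where
  "reindex_array \<phi> m = (\<lambda>w j. coord m (\<phi> (w, j)))"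

lemma coord_reindex_array [simp]: "coord (reindex_array \<phi> m) c = coord m (\<phi> c)"
  by (simp add: reindex_array_def coord_def)

lemma linear_reindex_array: "Vector_Spaces.linear cscale cscale (reindex_array \<phi>)"
  by (auto simp: Vector_Spaces.linear_iff VS.vector_space_axioms reindex_array_def coord_def
      cscale_def fun_eq_iff)

lemma reindex_array_supported_on:
  assumes "\<And>c. \<phi> (\<phi> c) = c" "m \<in> supported_on Cl"
  shows "reindex_array \<phi> m \<in> supported_on (\<phi> ` Cl)"
  unfolding supported_on_def
proof (intro CollectI allI impI)
  fix w j assume "(w, j) \<notin> \<phi> ` Cl"
  then have "\<phi> (w, j) \<notin> Cl" using assms(1)[of "(w, j)"] by (metis image_eqI)
  then show "reindex_array \<phi> m w j = 0"
    using assms(2) unfolding reindex_array_def coord_def supported_on_def by (cases "\<phi> (w, j)") auto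
qed

lemma kernel_on_reindex_subset:
  assumes "\<And>c. \<phi> (\<phi> c) = c"
  shows "kernel_on Cl R (\<lambda>e c. A e (\<phi> c)) \<subseteq> reindex_array \<phi> ` kernel_on (\<phi> ` Cl) R A"
proof
  fix m assume m: "m \<in> kernel_on Cl R (\<lambda>e c. A e (\<phi> c))"
  have "inj \<phi>" by (rule injI) (metis assms)
  have "(\<Sum>c\<in>\<phi> ` Cl. A e c * coord (reindex_array \<phi> m) c) = (\<Sum>c\<in>Cl. A e (\<phi> c) * coord m c)" for e
    using sum.reindex[OF inj_on_subset[OF \<open>inj \<phi>\<close> subset_UNIV],
        of "\<lambda>c. A e c * coord (reindex_array \<phi> m) c" Cl]
    by (simp add: assms)
  moreover have "reindex_array \<phi> m \<in> supported_on (\<phi> ` Cl)"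
    using m reindex_array_supported_on[OF assms] by (simp add: kernel_on_def)
  ultimately have "reindex_array \<phi> m \<in> kernel_on (\<phi> ` Cl) R A"
    using m unfolding kernel_on_def by simp
  moreover have "reindex_array \<phi> (reindex_array \<phi> m) = m"
    by (simp add: fun_eq_iff reindex_array_def coord_def assms)
  ultimately show "m \<in> reindex_array \<phi> ` kernel_on (\<phi> ` Cl) R A" by (metis image_eqI)
qed

lemma dim_kernel_on_reindex_le:
  assumes "\<And>c. \<phi> (\<phi> c) = c" "finite Cl"
  shows "VS.dim (kernel_on Cl R (\<lambda>e c. A e (\<phi> c))) \<le> VS.dim (kernel_on (\<phi> ` Cl) R A)"
proof -
  define K where "K = kernel_on (\<phi> ` Cl) R A"
  have "K \<subseteq> supported_on (\<phi> ` Cl)" unfolding K_def by (rule kernel_on_subset_supported)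
  have "\<phi> ` \<phi> ` Cl = Cl" by (simp add: image_image assms(1))
  then have "reindex_array \<phi> ` K \<subseteq> supported_on Cl"
    using reindex_array_supported_on[OF assms(1)] \<open>K \<subseteq> supported_on (\<phi> ` Cl)\<close> by force
  from supported_dim_mono[OF assms(2) this kernel_on_reindex_subset[OF assms(1), of Cl R A, folded K_def]]
  have "VS.dim (kernel_on Cl R (\<lambda>e c. A e (\<phi> c))) \<le> VS.dim (reindex_array \<phi> ` K)"
    unfolding K_def .
  also have "\<dots> \<le> VS.dim K"
    by (rule supported_dim_linear_image_le[OF finite_imageI[OF assms(2)]
          \<open>K \<subseteq> supported_on (\<phi> ` Cl)\<close> linear_reindex_array])
  finally show ?thesis unfolding K_def .
qed

definition add_col :: "nat \<times> nat \<Rightarrow> ('r \<Rightarrow> complex) \<Rightarrow> ('r \<Rightarrow> nat \<times> nat \<Rightarrow> complex)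
    \<Rightarrow> 'r \<Rightarrow> nat \<times> nat \<Rightarrow> complex" where
  "add_col c0 z A e c = (if c = c0 then z e else A e c)"

lemma sum_add_col:
  assumes "finite Cl" "c0 \<notin> Cl"
  shows "(\<Sum>c\<in>insert c0 Cl. add_col c0 z A e c * coord m c) =
    (\<Sum>c\<in>Cl. A e c * coord m c) + z e * coord m c0"
proof -
  have "(\<Sum>c\<in>Cl. add_col c0 z A e c * coord m c) = (\<Sum>c\<in>Cl. A e c * coord m c)"
    using assms(2) by (intro sum.cong) (auto simp: add_col_def)
  then show ?thesis using assms by (simp add: add_col_def)
qed

lemma kernel_on_subset_add_col:
  assumes "finite Cl" "c0 \<notin> Cl"
  shows "kernel_on Cl R A \<subseteq> kernel_on (insert c0 Cl) R (add_col c0 z A)"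
proof
  fix m assume m: "m \<in> kernel_on Cl R A"
  then have "coord m c0 = 0" using assms(2) by (auto simp: kernel_on_def supported_on_def coord_def)
  with m show "m \<in> kernel_on (insert c0 Cl) R (add_col c0 z A)"
    by (auto simp: kernel_on_def supported_on_def sum_add_col[OF assms])
qed

lemma dim_kernel_on_add_col_ge:
  assumes "finite Cl" "c0 \<notin> Cl" "\<forall>e\<in>R. (\<Sum>c\<in>Cl. A e c * coord m1 c) + z e = 0"
  shows "VS.dim (kernel_on Cl R A) + 1 \<le> VS.dim (kernel_on (insert c0 Cl) R (add_col c0 z A))"
proof (rule supported_dim_Suc_le_if_not_in_subspace[of "insert c0 Cl"])
  define m where "m w j = (if (w, j) \<in> Cl then m1 w j else if (w, j) = c0 then 1 else 0)" for w j
  have "coord m c0 = 1" using assms(2) by (simp add: m_def coord_def)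
  moreover have "(\<Sum>c\<in>Cl. A e c * coord m c) = (\<Sum>c\<in>Cl. A e c * coord m1 c)" for e
    by (intro sum.cong) (auto simp: m_def coord_def)
  ultimately have "(\<Sum>c\<in>insert c0 Cl. add_col c0 z A e c * coord m c) = 0" if "e \<in> R" for e
    unfolding sum_add_col[OF assms(1,2)] using assms(3) that by simp
  moreover have "m \<in> supported_on (insert c0 Cl)" by (simp add: supported_on_def m_def)
  ultimately show "m \<in> kernel_on (insert c0 Cl) R (add_col c0 z A)" by (simp add: kernel_on_def)
  show "m \<notin> kernel_on Cl R A"
    using \<open>coord m c0 = 1\<close> assms(2) unfolding kernel_on_def supported_on_def coord_def
    by (metis (mono_tags, lifting) mem_Collect_eq prod.collapse zero_neq_one)
qed (use assms(1) kernel_on_subset_supported kernel_on_subspace kernel_on_subset_add_col[OF assms(1,2)]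
  in blast)+

lemma kernel_on_add_col_subset:
  assumes "finite Cl" "finite R" "c0 \<notin> Cl"
    and "\<forall>c\<in>Cl. (\<Sum>e\<in>R. s e * A e c) = 0" "(\<Sum>e\<in>R. s e * z e) \<noteq> 0"
  shows "kernel_on (insert c0 Cl) R (add_col c0 z A) \<subseteq> kernel_on Cl R A"
proof
  fix m assume m: "m \<in> kernel_on (insert c0 Cl) R (add_col c0 z A)"
  then have rows: "(\<Sum>c\<in>Cl. A e c * coord m c) + z e * coord m c0 = 0" if "e \<in> R" for e
    using that by (auto simp: kernel_on_def sum_add_col[OF assms(1,3)])
  have "0 = (\<Sum>e\<in>R. s e * ((\<Sum>c\<in>Cl. A e c * coord m c) + z e * coord m c0))"
    using rows by simp
  also have "\<dots> = (\<Sum>c\<in>Cl. coord m c * (\<Sum>e\<in>R. s e * A e c)) + (\<Sum>e\<in>R. s e * z e) * coord m c0"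
    by (simp add: distrib_left sum.distrib sum_distrib_left sum_distrib_right sum.swap[of _ R] mult_ac)
  also have "\<dots> = (\<Sum>e\<in>R. s e * z e) * coord m c0"
    using assms(4) by simp
  finally have "coord m c0 = 0" using assms(5) by simp
  have "m w j = 0" if "(w, j) \<notin> Cl" for w j
  proof (cases "(w, j) = c0")
    case True
    then show ?thesis using \<open>coord m c0 = 0\<close> by (auto simp: coord_def)
  next
    case False
    then show ?thesis using m that by (simp add: kernel_on_def supported_on_def)
  qed
  then have "m \<in> supported_on Cl" by (simp add: supported_on_def)
  then show "m \<in> kernel_on Cl R A"
    using rows \<open>coord m c0 = 0\<close> by (simp add: kernel_on_def)
qed

lemma kernel_on_indep_cols:
  assumes "finite Cl"
  obtains J where "J \<subseteq> Cl" "card (Cl - J) = VS.dim (kernel_on Cl R A)"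
    "indep_on_coords J R (\<lambda>c e. A e c)"
proof -
  define K where "K = kernel_on Cl R A"
  obtain B where B: "B \<subseteq> K" "VS.independent B" "K \<subseteq> VS.span B" "finite B" "card B = VS.dim K"
    using supported_basis_exists[OF assms] kernel_on_subset_supported unfolding K_def by metis
  have "B \<subseteq> supported_on Cl" using B(1) kernel_on_subset_supported unfolding K_def by blast
  then have "indep_on_coords B Cl coord" using supported_independent_indep_on_coords B(2,4) by blast
  then obtain J' where J': "J' \<subseteq> Cl" "card J' = card B" "indep_on_coords B J' coord"
    using indep_on_coords_square[OF B(4) assms] by blast
  have "indep_on_coords (Cl - J') R (\<lambda>c e. A e c)"
    unfolding indep_on_coords_def
  proof (intro allI impI)
    fix l assume l: "\<forall>e\<in>R. (\<Sum>c\<in>Cl - J'. l c * A e c) = 0"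
    define m where "m = (\<lambda>w j. if (w, j) \<in> Cl - J' then l (w, j) else 0)"
    have "m \<in> K" unfolding K_def kernel_on_def
    proof (intro CollectI conjI ballI)
      show "m \<in> supported_on Cl" unfolding supported_on_def m_def by auto
      fix e assume "e \<in> R"
      have "(\<Sum>c\<in>Cl. A e c * coord m c) = (\<Sum>c\<in>Cl - J'. l c * A e c)"
        by (rule sum.mono_neutral_cong_right) (auto simp: assms m_def coord_def mult.commute)
      then show "(\<Sum>c\<in>Cl. A e c * coord m c) = 0" using l \<open>e \<in> R\<close> by simp
    qed
    then obtain u where u: "m = (\<Sum>b\<in>B. cscale (u b) b)"
      using B(3) VS.span_finite[OF B(4)] by auto
    have "\<forall>c\<in>J'. (\<Sum>b\<in>B. u b * coord b c) = 0"
    proof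
      fix c assume "c \<in> J'"
      then have "coord m c = 0" by (simp add: m_def coord_def)
      then show "(\<Sum>b\<in>B. u b * coord b c) = 0" unfolding u coord_def sum_cscale_apply .
    qed
    then have "\<forall>b\<in>B. u b = 0" using J'(3) unfolding indep_on_coords_def by blast
    then have "m = 0" unfolding u by simp
    moreover have "l c = m (fst c) (snd c)" if "c \<in> Cl - J'" for c
      using that by (simp add: m_def)
    ultimately show "\<forall>c\<in>Cl - J'. l c = 0" by simp
  qed
  then show ?thesis
    using that[of "Cl - J'"] J'(1,2) B(5) by (simp add: K_def Diff_Diff_Int Int_absorb1)
qed

lemma dim_kernel_on_le_if_indep_cols:
  assumes "finite Cl" "J \<subseteq> Cl" "indep_on_coords J R (\<lambda>c e. A e c)"
  shows "VS.dim (kernel_on Cl R A) \<le> card (Cl - J)"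
proof (rule ccontr)
  define K where "K = kernel_on Cl R A"
  assume "\<not> VS.dim K \<le> card (Cl - J)"
  obtain B where B: "B \<subseteq> K" "VS.independent B" "finite B" "card B = VS.dim K"
    using supported_basis_exists[OF assms(1)] kernel_on_subset_supported unfolding K_def by metis
  obtain l where l: "\<exists>b\<in>B. l b \<noteq> 0" "\<forall>c\<in>Cl - J. (\<Sum>b\<in>B. coord b c * l b) = 0"
    using homogeneous_system_nontrivial_solution[of "Cl - J" B "\<lambda>c b. coord b c"]
      \<open>\<not> VS.dim K \<le> card (Cl - J)\<close> assms(1) B(3,4) by auto
  define m where "m = (\<Sum>b\<in>B. cscale (l b) b)"
  have "m \<in> K"
    using VS.span_minimal[OF B(1) kernel_on_subspace[of Cl R A, folded K_def]]
      VS.span_sum VS.span_scale VS.span_base unfolding m_def by (metis (no_types, lifting) subsetD)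
  have off_J: "coord m c = 0" if "c \<in> Cl - J" for c
    using l(2) that unfolding m_def coord_def sum_cscale_apply by (simp add: mult.commute)
  have "\<forall>e\<in>R. (\<Sum>c\<in>J. coord m c * A e c) = 0"
  proof
    fix e assume "e \<in> R"
    have "(\<Sum>c\<in>J. coord m c * A e c) = (\<Sum>c\<in>Cl. A e c * coord m c)"
      by (rule sum.mono_neutral_cong_left) (use assms(1,2) off_J in \<open>auto simp: mult.commute\<close>)
    also have "\<dots> = 0" using \<open>m \<in> K\<close> \<open>e \<in> R\<close> unfolding K_def kernel_on_def by auto
    finally show "(\<Sum>c\<in>J. coord m c * A e c) = 0" .
  qed
  then have on_J: "coord m c = 0" if "c \<in> J" for c
    using assms(3) that unfolding indep_on_coords_def by blast
  have "m = 0"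
  proof (intro ext)
    fix w j
    show "m w j = 0 w j"
      using on_J[of "(w, j)"] off_J[of "(w, j)"] \<open>m \<in> K\<close>
      unfolding K_def kernel_on_def supported_on_def coord_def by auto
  qed
  then have "\<forall>b\<in>B. l b = 0" using B(2,3) unfolding m_def VS.independent_explicit_module by blast
  then show False using l(1) by blast
qed

lemma dim_kernel_on_generic_le:
  fixes A :: "('t \<Rightarrow> complex) \<Rightarrow> 'r \<Rightarrow> nat \<times> nat \<Rightarrow> complex"
  assumes "finite Cl" "finite R"
    and "\<And>e c. e \<in> R \<Longrightarrow> c \<in> Cl \<Longrightarrow> rat_poly_fun V (\<lambda>x. A x e c)"
    and "alg_indep_Q V x"
  shows "VS.dim (kernel_on Cl R (A x)) \<le> VS.dim (kernel_on Cl R (A y))"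
proof -
  obtain J where J: "J \<subseteq> Cl" "card (Cl - J) = VS.dim (kernel_on Cl R (A y))"
      "indep_on_coords J R (\<lambda>c e. A y e c)"
    using kernel_on_indep_cols[OF assms(1)] by blast
  have "indep_on_coords J R (\<lambda>c e. A x e c)"
    using indep_cols_generic[of J R V A x y] finite_subset[OF J(1) assms(1)] assms(2,3,4) J(1,3)
    by blast
  then show ?thesis using dim_kernel_on_le_if_indep_cols[OF assms(1) J(1)] J(2) by simp
qed

section \<open>Rigidity matrices of generic realizations\<close>

definition coords :: "nat \<Rightarrow> nat \<Rightarrow> (nat \<times> nat) set" where
  "coords n k = {0..<n} \<times> {0..<k}"

lemma finite_coords [simp]: "finite (coords n k)"
  by (simp add: coords_def)

definition rig_mat :: "(nat \<Rightarrow> nat \<Rightarrow> complex) \<Rightarrow> nat \<times> nat \<Rightarrow> nat \<times> nat \<Rightarrow> complex" where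
  "rig_mat p e c = rig_entry p e (fst c) (snd c)"

lemma simple_graph_finite: "simple_graph n E \<Longrightarrow> finite E"
  unfolding simple_graph_def by (rule finite_subset[of _ "{0..<n} \<times> {0..<n}"]) auto

lemma motion_dim_eq_dim_kernel_on:
  "motion_dim n E k p = VS.dim (kernel_on (coords n k) E (rig_mat p))"
proof -
  have "(\<Sum>w<n. \<Sum>j<k. rig_entry p e w j * m w j) = (\<Sum>c\<in>coords n k. rig_mat p e c * coord m c)"
    for e m
    unfolding coords_def rig_mat_def coord_def atLeast0LessThan sum.cartesian_product
    by (simp add: split_beta)
  then have "inf_motions n E k p = kernel_on (coords n k) E (rig_mat p)"
    unfolding inf_motions_def kernel_on_def supported_on_def by (auto simp: coords_def)
  then show ?thesis by (simp add: motion_dim_def)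
qed

lemma rig_mat_row_sum:
  assumes "u < n" "v < n" "u \<noteq> v"
  shows "(\<Sum>c\<in>coords n k. rig_mat p (u, v) c * coord m c) = (\<Sum>j<k. (p u j - p v j) * (m u j - m v j))"
proof -
  have column: "(\<Sum>w<n. rig_entry p (u, v) w j * m w j) = (p u j - p v j) * (m u j - m v j)" for j
  proof -
    have "(\<Sum>w<n. rig_entry p (u, v) w j * m w j) =
        (\<Sum>w<n. (if w = u then (p u j - p v j) * m u j else 0) +
                (if w = v then (p v j - p u j) * m v j else 0))"
      using assms(3) by (intro sum.cong) (auto simp: rig_entry_def)
    also have "\<dots> = (p u j - p v j) * m u j + (p v j - p u j) * m v j"
      using assms by (simp add: sum.distrib)
    finally show ?thesis by (simp add: algebra_simps)
  qed
  have "(\<Sum>c\<in>coords n k. rig_mat p (u, v) c * coord m c) =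
      (\<Sum>w<n. \<Sum>j<k. rig_entry p (u, v) w j * m w j)"
    unfolding coords_def rig_mat_def coord_def atLeast0LessThan sum.cartesian_product
    by (simp add: split_beta)
  also have "\<dots> = (\<Sum>j<k. \<Sum>w<n. rig_entry p (u, v) w j * m w j)" by (rule sum.swap)
  also have "\<dots> = (\<Sum>j<k. (p u j - p v j) * (m u j - m v j))" by (simp only: column)
  finally show ?thesis .
qed

lemma rat_poly_fun_rig_mat:
  assumes "fst e < n" "snd e < n" "snd c < k"
  shows "rat_poly_fun (coords n k) (\<lambda>z. rig_mat (curry z) e c)"
proof -
  have "rat_poly_fun (coords n k) (\<lambda>z. z (w, snd c))" if "w < n" for w
    using that assms(3) by (intro rat_poly_fun_var) (auto simp: coords_def)
  then have diff: "rat_poly_fun (coords n k) (\<lambda>z. z (fst e, snd c) - z (snd e, snd c))"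
    "rat_poly_fun (coords n k) (\<lambda>z. z (snd e, snd c) - z (fst e, snd c))"
    using assms(1,2) rat_poly_fun_diff by blast+
  consider "fst c = fst e" | "fst c \<noteq> fst e" "fst c = snd e" | "fst c \<noteq> fst e" "fst c \<noteq> snd e"
    by blast
  then show ?thesis
    by cases (use diff rat_poly_fun_const[of "coords n k" 0] in \<open>simp_all add: rig_mat_def rig_entry_def\<close>)
qed

lemma generic_alg_indep_coords:
  assumes "generic n k p" "j \<le> k"
  shows "alg_indep_Q (coords n j) (case_prod p)"
proof (rule alg_indep_Q_subset)
  show "alg_indep_Q (coords n k) (case_prod p)"
    using assms(1) by (simp add: generic_def coords_def)
  show "coords n j \<subseteq> coords n k" using assms(2) by (auto simp: coords_def)
qed simp

lemma dim_kernel_rig_mat_generic_le: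
  assumes "simple_graph n E" "alg_indep_Q (coords n k) (case_prod p)"
  shows "VS.dim (kernel_on (coords n k) E (rig_mat p)) \<le> VS.dim (kernel_on (coords n k) E (rig_mat y))"
proof -
  have "finite E" using simple_graph_finite[OF assms(1)] .
  have poly: "rat_poly_fun (coords n k) (\<lambda>z. rig_mat (curry z) e c)" if "e \<in> E" "c \<in> coords n k" for e c
    using that assms(1) by (intro rat_poly_fun_rig_mat) (auto simp: simple_graph_def coords_def)
  show ?thesis
    using dim_kernel_on_generic_le[where A = "\<lambda>z. rig_mat (curry z)" and V = "coords n k"
        and x = "case_prod p" and y = "case_prod y", OF finite_coords \<open>finite E\<close> poly assms(2)]
    by simp
qed

lemma dim_kernel_transposed_rig_mat_generic_le:
  assumes "simple_graph n E" "alg_indep_Q (coords n k) (case_prod p)"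
  shows "VS.dim (kernel_on E (coords n k) (\<lambda>c e. rig_mat p e c))
    \<le> VS.dim (kernel_on E (coords n k) (\<lambda>c e. rig_mat y e c))"
proof -
  have poly: "rat_poly_fun (coords n k) (\<lambda>z. rig_mat (curry z) e c)" if "c \<in> coords n k" "e \<in> E" for e c
    using that assms(1) by (intro rat_poly_fun_rig_mat) (auto simp: simple_graph_def coords_def)
  show ?thesis
    using dim_kernel_on_generic_le[where A = "\<lambda>z c e. rig_mat (curry z) e c" and V = "coords n k"
        and x = "case_prod p" and y = "case_prod y",
        OF simple_graph_finite[OF assms(1)] finite_coords poly assms(2)]
    by simp
qed

lemma row_dependence_in_kernel_transposed:
  fixes p :: "nat \<Rightarrow> nat \<Rightarrow> real" and c :: "nat \<times> nat \<Rightarrow> real"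
  assumes "\<forall>w<n. \<forall>j<D. (\<Sum>e\<in>E. c e * rig_entry p e w j) = 0"
  defines "s \<equiv> \<lambda>u v. if (u, v) \<in> E then complex_of_real (c (u, v)) else 0"
  shows "s \<in> kernel_on E (coords n D) (\<lambda>c e. rig_mat (\<lambda>w j. complex_of_real (p w j)) e c)"
  unfolding kernel_on_def
proof (intro CollectI conjI ballI)
  show "s \<in> supported_on E" by (simp add: supported_on_def s_def)
  fix wj assume "wj \<in> coords n D"
  then obtain w j where wj: "wj = (w, j)" "w < n" "j < D" by (auto simp: coords_def)
  have "rig_mat (\<lambda>w j. complex_of_real (p w j)) e wj * coord s e =
      complex_of_real (c e * rig_entry p e w j)" if "e \<in> E" for e
    using that by (simp add: wj rig_mat_def rig_entry_def s_def coord_def)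
  then have "(\<Sum>e\<in>E. rig_mat (\<lambda>w j. complex_of_real (p w j)) e wj * coord s e) =
      complex_of_real (\<Sum>e\<in>E. c e * rig_entry p e w j)"
    unfolding of_real_sum by (rule sum.cong[OF refl])
  then show "(\<Sum>e\<in>E. rig_mat (\<lambda>w j. complex_of_real (p w j)) e wj * coord s e) = 0"
    using assms(1) wj by simp
qed

text \<open>The dependence of the rows at a generic real realization is a self-stress that persists
  under specialization, because kernel dimensions can only grow.\<close>

lemma self_stress_exists:
  assumes "simple_graph n E" "\<not> M_independent n E D"
  obtains s where "s \<in> kernel_on E (coords n D) (\<lambda>c e. rig_mat r e c)" "s \<noteq> 0"
proof -
  have "finite E" using simple_graph_finite[OF assms(1)] .
  obtain p where p: "generic n D p" "\<not> rows_independent n E D p"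
    using assms(2) unfolding M_independent_def by blast
  then obtain c where c: "\<forall>w<n. \<forall>j<D. (\<Sum>e\<in>E. c e * rig_entry p e w j) = 0"
    and "\<not> (\<forall>e\<in>E. c e = 0)"
    unfolding rows_independent_def by (auto simp del: Set.ball_simps)
  then obtain e1 where e1: "e1 \<in> E" "c e1 \<noteq> 0" by blast
  define pc where "pc w j = complex_of_real (p w j)" for w j
  define K where "K x = kernel_on E (coords n D) (\<lambda>c e. rig_mat x e c)" for x
  have "\<exists>s\<in>K pc. s \<noteq> 0"
  proof
    let ?s = "\<lambda>u v. if (u, v) \<in> E then complex_of_real (c (u, v)) else 0"
    show "?s \<in> K pc" using row_dependence_in_kernel_transposed[OF c] unfolding K_def pc_def .
    show "?s \<noteq> 0"
    proof
      assume "?s = 0"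
      then have "?s (fst e1) (snd e1) = (0 :: nat \<Rightarrow> nat \<Rightarrow> complex) (fst e1) (snd e1)"
        by (rule fun_cong[OF fun_cong])
      with e1 show False by simp
    qed
  qed
  then have "0 < VS.dim (K pc)"
    using supported_dim_pos_iff[OF \<open>finite E\<close> kernel_on_subset_supported] unfolding K_def by blast
  also have "VS.dim (K pc) \<le> VS.dim (K r)"
  proof -
    have "alg_indep_Q (coords n D) (\<lambda>t. complex_of_real ((\<lambda>(w, j). p w j) t))"
      using alg_indep_Q_of_real[of _ "\<lambda>(w, j). p w j"] p(1) unfolding generic_def coords_def .
    then have "alg_indep_Q (coords n D) (case_prod pc)" by (simp add: pc_def case_prod_beta')
    then show ?thesis unfolding K_def by (rule dim_kernel_transposed_rig_mat_generic_le[OF assms(1)])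
  qed
  finally show ?thesis
    using that supported_dim_pos_iff[OF \<open>finite E\<close> kernel_on_subset_supported] unfolding K_def by blast
qed

section \<open>The infinitesimal rotation in the plane of the coordinates \<open>i\<close> and \<open>i + 1\<close>\<close>

definition rotation :: "nat \<Rightarrow> (nat \<Rightarrow> nat \<Rightarrow> complex) \<Rightarrow> nat \<Rightarrow> nat \<Rightarrow> nat \<Rightarrow> complex" where
  "rotation n x i w j =
     (if w < n \<and> j = i then x w (Suc i) else if w < n \<and> j = Suc i then - x w i else 0)"

text \<open>The contribution of the \<open>i\<close>-th coordinates of \<open>rotation n x i\<close> to row \<open>e\<close> of the rigidity
  matrix of \<open>x\<close>.\<close>

definition rotation_term :: "(nat \<Rightarrow> nat \<Rightarrow> complex) \<Rightarrow> nat \<Rightarrow> nat \<times> nat \<Rightarrow> complex" where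
  "rotation_term x i e = (x (fst e) i - x (snd e) i) * (x (fst e) (Suc i) - x (snd e) (Suc i))"

lemma rat_poly_fun_rotation_term:
  assumes "fst e < n" "snd e < n"
  shows "rat_poly_fun (coords n (i + 2)) (\<lambda>z. rotation_term (curry z) i e)"
  unfolding rotation_term_def curry_def
  using assms by (intro rat_poly_fun_mult rat_poly_fun_diff rat_poly_fun_var) (auto simp: coords_def)

definition augmented_kernel :: "nat \<Rightarrow> (nat \<times> nat) set \<Rightarrow> nat \<Rightarrow> (nat \<Rightarrow> nat \<Rightarrow> complex)
    \<Rightarrow> (nat \<Rightarrow> nat \<Rightarrow> complex) set" where
  "augmented_kernel n E i x =
     kernel_on (insert (0, i) (coords n i)) E (add_col (0, i) (rotation_term x i) (rig_mat x))"

lemma dim_augmented_kernel_generic_le: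
  assumes "simple_graph n E" "generic n (i + 2) r"
  shows "VS.dim (augmented_kernel n E i r) \<le> VS.dim (augmented_kernel n E i y)"
proof -
  have generic: "alg_indep_Q (coords n (i + 2)) (case_prod r)"
    using generic_alg_indep_coords[OF assms(2) order_refl] .
  have poly: "rat_poly_fun (coords n (i + 2))
      (\<lambda>z. add_col (0, i) (rotation_term (curry z) i) (rig_mat (curry z)) e c)"
    if "e \<in> E" "c \<in> insert (0, i) (coords n i)" for e c
  proof -
    have e: "fst e < n" "snd e < n" using that(1) assms(1) by (auto simp: simple_graph_def)
    show ?thesis
    proof (cases "c = (0, i)")
      case True
      then show ?thesis using rat_poly_fun_rotation_term[OF e] by (simp add: add_col_def)
    next
      case False
      then have "snd c < i + 2" using that(2) by (auto simp: coords_def)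
      with False show ?thesis using rat_poly_fun_rig_mat[OF e] by (simp add: add_col_def)
    qed
  qed
  show ?thesis
    using dim_kernel_on_generic_le[where A = "\<lambda>z. add_col (0, i) (rotation_term (curry z) i) (rig_mat (curry z))"
        and V = "coords n (i + 2)" and x = "case_prod r" and y = "case_prod y",
        OF finite.insertI[OF finite_coords] simple_graph_finite[OF assms(1)] poly generic]
    unfolding augmented_kernel_def by simp
qed

text \<open>Moving the coordinates \<open>i\<close> and \<open>i + 1\<close> of the ends of a stressed edge to \<open>1, 0\<close> and
  \<open>0, 1\<close>, and all other vertices to the origin there, makes the new column minus a unit vector,
  which the stress does not annihilate.\<close>

lemma augmented_kernel_specialized_subset:
  assumes "simple_graph n E" "(u0, v0) \<in> E" "coord s (u0, v0) \<noteq> 0"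
    and stress: "\<forall>c\<in>coords n i. (\<Sum>e\<in>E. coord s e * rig_mat r e c) = 0"
  defines "y \<equiv> \<lambda>w j. if j = i then (if w = u0 then 1 else 0)
      else if j = Suc i then (if w = v0 then 1 else 0) else r w j"
  shows "augmented_kernel n E i y \<subseteq> kernel_on (coords n i) E (rig_mat r)"
proof -
  have "finite E" using simple_graph_finite[OF assms(1)] .
  have "u0 < v0" using assms(1,2) by (auto simp: simple_graph_def)
  have rig_mat_y: "rig_mat y e c = rig_mat r e c" if "c \<in> coords n i" for e c
  proof -
    have "snd c < i" using that by (auto simp: coords_def)
    then show ?thesis by (simp add: rig_mat_def rig_entry_def y_def)
  qed
  have "rotation_term y i e = (if e = (u0, v0) then -1 else 0)" if "e \<in> E" for e
    using that assms(1) \<open>u0 < v0\<close> by (auto simp: simple_graph_def rotation_term_def y_def)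
  then have "(\<Sum>e\<in>E. coord s e * rotation_term y i e) = - coord s (u0, v0)"
    using assms(2) \<open>finite E\<close> by (simp add: if_distrib[of "\<lambda>t. _ * t"] sum.delta' cong: if_cong)
  then have new_col: "(\<Sum>e\<in>E. coord s e * rotation_term y i e) \<noteq> 0" using assms(3) by simp
  have old_cols: "\<forall>c\<in>coords n i. (\<Sum>e\<in>E. coord s e * rig_mat y e c) = 0"
    using stress by (simp add: rig_mat_y)
  have "(0, i) \<notin> coords n i" by (simp add: coords_def)
  from kernel_on_add_col_subset[OF finite_coords \<open>finite E\<close> this old_cols new_col]
  have "augmented_kernel n E i y \<subseteq> kernel_on (coords n i) E (rig_mat y)"
    unfolding augmented_kernel_def .
  also have "\<dots> = kernel_on (coords n i) E (rig_mat r)"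
    by (rule kernel_on_cong) (simp add: rig_mat_y)
  finally show ?thesis .
qed

lemma rotation_term_not_in_range:
  assumes "simple_graph n E" "\<not> M_independent n E D" "i \<le> D" "generic n (i + 2) r"
  shows "\<nexists>m. \<forall>e\<in>E. (\<Sum>c\<in>coords n i. rig_mat r e c * coord m c) + rotation_term r i e = 0"
proof
  assume "\<exists>m. \<forall>e\<in>E. (\<Sum>c\<in>coords n i. rig_mat r e c * coord m c) + rotation_term r i e = 0"
  then obtain m where m: "\<forall>e\<in>E. (\<Sum>c\<in>coords n i. rig_mat r e c * coord m c) + rotation_term r i e = 0"
    by blast
  obtain s where s: "s \<in> kernel_on E (coords n D) (\<lambda>c e. rig_mat r e c)" "s \<noteq> 0"
    using self_stress_exists[OF assms(1,2)] by blast
  then obtain u0 v0 where "s u0 v0 \<noteq> 0" by (auto simp: fun_eq_iff)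
  then have e0: "(u0, v0) \<in> E" "coord s (u0, v0) \<noteq> 0"
    using s(1) by (auto simp: kernel_on_def supported_on_def coord_def)
  have stress: "\<forall>c\<in>coords n i. (\<Sum>e\<in>E. coord s e * rig_mat r e c) = 0"
    using s(1) assms(3) by (auto simp: kernel_on_def coords_def mult.commute)
  define K0 where "K0 = kernel_on (coords n i) E (rig_mat r)"
  have "VS.dim K0 + 1 \<le> VS.dim (augmented_kernel n E i r)"
    unfolding K0_def augmented_kernel_def
    by (rule dim_kernel_on_add_col_ge[OF finite_coords _ m]) (simp add: coords_def)
  also have "\<dots> \<le> VS.dim (augmented_kernel n E i (\<lambda>w j. if j = i then (if w = u0 then 1 else 0)
      else if j = Suc i then (if w = v0 then 1 else 0) else r w j))"
    by (rule dim_augmented_kernel_generic_le[OF assms(1,4)])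
  also have "\<dots> \<le> VS.dim K0"
    using supported_dim_mono[OF finite_coords kernel_on_subset_supported
        augmented_kernel_specialized_subset[OF assms(1) e0 stress]]
    unfolding K0_def .
  finally show False by simp
qed

lemma rotation_in_kernel_on:
  assumes "simple_graph n E"
  shows "rotation n r i \<in> kernel_on (coords n (Suc (Suc i))) E (rig_mat r)"
  unfolding kernel_on_def
proof (intro CollectI conjI ballI)
  show "rotation n r i \<in> supported_on (coords n (Suc (Suc i)))"
    by (auto simp: supported_on_def coords_def rotation_def)
  fix e assume "e \<in> E"
  then obtain u v where uv: "e = (u, v)" "u < v" "v < n" using assms by (auto simp: simple_graph_def)
  let ?m = "rotation n r i"
  have "(\<Sum>c\<in>coords n (Suc (Suc i)). rig_mat r e c * coord ?m c) =
      (\<Sum>j<Suc (Suc i). (r u j - r v j) * (?m u j - ?m v j))"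
    unfolding uv(1) by (rule rig_mat_row_sum) (use uv in auto)
  also have "\<dots> = (\<Sum>j<i. (r u j - r v j) * (?m u j - ?m v j)) + ((r u i - r v i) * (?m u i - ?m v i)
      + (r u (Suc i) - r v (Suc i)) * (?m u (Suc i) - ?m v (Suc i)))"
    by simp
  also have "(\<Sum>j<i. (r u j - r v j) * (?m u j - ?m v j)) = 0"
    by (rule sum.neutral) (auto simp: rotation_def)
  also have "(r u i - r v i) * (?m u i - ?m v i) + (r u (Suc i) - r v (Suc i)) * (?m u (Suc i) - ?m v (Suc i)) = 0"
    using uv by (simp add: rotation_def algebra_simps)
  finally show "(\<Sum>c\<in>coords n (Suc (Suc i)). rig_mat r e c * coord ?m c) = 0" by simp
qed

lemma rotation_decomposition_cancels_rotation_term: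
  assumes "simple_graph n E" "m1 \<in> kernel_on (coords n (Suc i)) E (rig_mat r)"
    and "m2 \<in> supported_on (coords n i \<union> {0..<n} \<times> {Suc i})" "rotation n r i = m1 + m2"
  shows "\<forall>e\<in>E. (\<Sum>c\<in>coords n i. rig_mat r e c * coord m1 c) + rotation_term r i e = 0"
proof
  have m1_i: "m1 w i = r w (Suc i)" if "w < n" for w
  proof -
    have "m2 w i = 0" using assms(3) by (auto simp: supported_on_def coords_def)
    moreover have "rotation n r i w i = m1 w i + m2 w i" using assms(4) by simp
    ultimately show ?thesis using that by (simp add: rotation_def)
  qed
  fix e assume "e \<in> E"
  then obtain u v where uv: "e = (u, v)" "u < v" "v < n" using assms(1) by (auto simp: simple_graph_def)
  then have row_sum: "(\<Sum>c\<in>coords n k. rig_mat r e c * coord m1 c) =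
      (\<Sum>j<k. (r u j - r v j) * (m1 u j - m1 v j))" for k
    using rig_mat_row_sum[of u n v] by simp
  have "0 = (\<Sum>c\<in>coords n (Suc i). rig_mat r e c * coord m1 c)"
    using assms(2) \<open>e \<in> E\<close> by (simp add: kernel_on_def)
  also have "\<dots> = (\<Sum>j<i. (r u j - r v j) * (m1 u j - m1 v j)) + (r u i - r v i) * (m1 u i - m1 v i)"
    by (simp add: row_sum)
  also have "(\<Sum>j<i. (r u j - r v j) * (m1 u j - m1 v j)) = (\<Sum>c\<in>coords n i. rig_mat r e c * coord m1 c)"
    by (simp add: row_sum)
  also have "(r u i - r v i) * (m1 u i - m1 v i) = rotation_term r i e"
    using uv m1_i[of u] m1_i[of v] by (simp add: rotation_term_def)
  finally show "(\<Sum>c\<in>coords n i. rig_mat r e c * coord m1 c) + rotation_term r i e = 0" by simp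
qed

lemma dim_kernel_on_rotation_ineq:
  assumes "simple_graph n E"
    and "\<nexists>m. \<forall>e\<in>E. (\<Sum>c\<in>coords n i. rig_mat r e c * coord m c) + rotation_term r i e = 0"
  defines "K \<equiv> \<lambda>Cl. kernel_on Cl E (rig_mat r)"
  shows "VS.dim (K (coords n (Suc i))) + VS.dim (K (coords n i \<union> {0..<n} \<times> {Suc i})) + 1
    \<le> VS.dim (K (coords n (Suc (Suc i)))) + VS.dim (K (coords n i))"
proof -
  define Sa where "Sa = K (coords n (Suc i))"
  define Sb where "Sb = K (coords n i \<union> {0..<n} \<times> {Suc i})"
  define S where "S = {x + y |x y. x \<in> Sa \<and> y \<in> Sb}"
  have supp: "Sa \<subseteq> supported_on (coords n (Suc (Suc i)))" "Sb \<subseteq> supported_on (coords n (Suc (Suc i)))"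
    unfolding Sa_def Sb_def K_def
    by (auto intro!: subset_trans[OF kernel_on_subset_supported] simp: supported_on_def coords_def)
  have "Sa \<inter> Sb = K (coords n i)"
  proof -
    have "coords n (Suc i) \<inter> (coords n i \<union> {0..<n} \<times> {Suc i}) = coords n i"
      by (auto simp: coords_def)
    then show ?thesis unfolding Sa_def Sb_def K_def by (simp add: kernel_on_Int)
  qed
  moreover have "VS.subspace Sa" "VS.subspace Sb"
    unfolding Sa_def Sb_def K_def by (rule kernel_on_subspace)+
  ultimately have "VS.dim Sa + VS.dim Sb \<le> VS.dim S + VS.dim (K (coords n i))"
    using supported_dim_Int_sums[OF finite_coords supp] unfolding S_def by simp
  moreover have "VS.dim S + 1 \<le> VS.dim (K (coords n (Suc (Suc i))))"
  proof (rule supported_dim_Suc_le_if_not_in_subspace[OF finite_coords])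
    show "K (coords n (Suc (Suc i))) \<subseteq> supported_on (coords n (Suc (Suc i)))"
      unfolding K_def by (rule kernel_on_subset_supported)
    show "VS.subspace S" unfolding S_def Sa_def Sb_def K_def by (intro VS.subspace_sums kernel_on_subspace)
    have "coords n (Suc i) \<subseteq> coords n (Suc (Suc i))"
      "coords n i \<union> {0..<n} \<times> {Suc i} \<subseteq> coords n (Suc (Suc i))"
      by (auto simp: coords_def)
    then have "Sa \<subseteq> K (coords n (Suc (Suc i)))" "Sb \<subseteq> K (coords n (Suc (Suc i)))"
      unfolding Sa_def Sb_def K_def by (simp_all add: kernel_on_mono)
    then show "S \<subseteq> K (coords n (Suc (Suc i)))"
      unfolding S_def K_def using VS.subspace_add[OF kernel_on_subspace] by blast
    show "rotation n r i \<in> K (coords n (Suc (Suc i)))"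
      unfolding K_def by (rule rotation_in_kernel_on[OF assms(1)])
    show "rotation n r i \<notin> S"
      using rotation_decomposition_cancels_rotation_term[OF assms(1)] assms(2) supp(2)
      unfolding S_def Sa_def Sb_def K_def kernel_on_def by blast
  qed
  ultimately show ?thesis unfolding Sa_def Sb_def by linarith
qed

text \<open>Genericity of \<open>q\<close> is applied against \<open>r\<close> with the coordinates \<open>i\<close> and \<open>i + 1\<close> swapped.\<close>

lemma motion_dim_generic_le_swapped:
  assumes "simple_graph n E" "generic n (Suc i) q"
  shows "motion_dim n E (Suc i) q \<le> VS.dim (kernel_on (coords n i \<union> {0..<n} \<times> {Suc i}) E (rig_mat r))"
proof -
  define \<tau> where "\<tau> = Transposition.transpose i (Suc i)"
  have "\<tau> ` {0..<Suc i} = insert (Suc i) {0..<i}"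
  proof -
    have "\<tau> ` {0..<i} = {0..<i}" by (rule image_cong[OF refl, where g = id, simplified]) (simp add: \<tau>_def)
    moreover have "{0..<Suc i} = insert i {0..<i}" by auto
    ultimately show ?thesis by (simp add: \<tau>_def)
  qed
  then have "map_prod id \<tau> ` coords n (Suc i) = {0..<n} \<times> insert (Suc i) {0..<i}"
    unfolding coords_def by (intro map_prod_surj_on) simp_all
  also have "\<dots> = coords n i \<union> {0..<n} \<times> {Suc i}" by (auto simp: coords_def)
  finally have "map_prod id \<tau> ` coords n (Suc i) = coords n i \<union> {0..<n} \<times> {Suc i}" .
  moreover have "rig_mat (\<lambda>w j. r w (\<tau> j)) = (\<lambda>e c. rig_mat r e (map_prod id \<tau> c))"
    by (simp add: fun_eq_iff rig_mat_def rig_entry_def map_prod_def split_beta)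
  moreover have "motion_dim n E (Suc i) q \<le> VS.dim (kernel_on (coords n (Suc i)) E (rig_mat (\<lambda>w j. r w (\<tau> j))))"
    using dim_kernel_rig_mat_generic_le[OF assms(1) generic_alg_indep_coords[OF assms(2) order_refl]]
    by (simp add: motion_dim_eq_dim_kernel_on)
  moreover have "VS.dim (kernel_on (coords n (Suc i)) E (\<lambda>e c. rig_mat r e (map_prod id \<tau> c)))
      \<le> VS.dim (kernel_on (map_prod id \<tau> ` coords n (Suc i)) E (rig_mat r))"
    by (rule dim_kernel_on_reindex_le) (simp_all add: \<tau>_def map_prod_def split_beta)
  ultimately show ?thesis by simp
qed

theorem lemma3p10:
  fixes n d :: nat and E :: "(nat \<times> nat) set"
  assumes "d \<ge> 3"
    and "simple_graph n E"
    and "\<not> M_independent n E (d - 2)"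
    and "1 \<le> i" and "i \<le> d - 2"
    and "generic n i p" and "generic n (i + 1) q" and "generic n (i + 2) r"
  shows "int (motion_dim n E i p)
           \<ge> 2 * int (motion_dim n E (i + 1) q) - int (motion_dim n E (i + 2) r) + 1"
proof -
  let ?K = "\<lambda>Cl. VS.dim (kernel_on Cl E (rig_mat r))"
  have "?K (coords n (Suc i)) + ?K (coords n i \<union> {0..<n} \<times> {Suc i}) + 1
      \<le> ?K (coords n (Suc (Suc i))) + ?K (coords n i)"
    using dim_kernel_on_rotation_ineq[OF assms(2) rotation_term_not_in_range[OF assms(2,3,5,8)]] .
  moreover have "motion_dim n E (i + 1) q \<le> ?K (coords n (Suc i))"
    using dim_kernel_rig_mat_generic_le[OF assms(2) generic_alg_indep_coords[OF assms(7) order_refl]]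
    by (simp add: motion_dim_eq_dim_kernel_on)
  moreover have "motion_dim n E (i + 1) q \<le> ?K (coords n i \<union> {0..<n} \<times> {Suc i})"
    using motion_dim_generic_le_swapped[OF assms(2)] assms(7) by simp
  moreover have "?K (coords n i) \<le> motion_dim n E i p"
    using dim_kernel_rig_mat_generic_le[OF assms(2) generic_alg_indep_coords[OF assms(8)]]
    by (simp add: motion_dim_eq_dim_kernel_on)
  moreover have "motion_dim n E (i + 2) r = ?K (coords n (Suc (Suc i)))"
    by (simp add: motion_dim_eq_dim_kernel_on numeral_2_eq_2)
  ultimately show ?thesis by linarith
qed

end
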